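(* Let $(\mathfrak A,\alpha,\omega)$ be a $C^*$-dynamical system with GNS covariant representation $(\mathcal H,\pi,U,\Omega)$, and suppose that the support $s(\omega)$ of $\omega$ in the bidual $\mathfrak A^{**}$ is central (equivalently, $\Omega$ is separating for $M:=\pi(\mathfrak A)''$). Then for every $z\in\mathbb T$, $$\overline{M_z\Omega}=\overline{(M')_z\Omega}=E_z\mathcal H .$$ Moreover $\sigma_{\mathrm{pp}}(U)=\sigma_{\mathrm{pp}}(U)^{-1}$, i.e. $z\in\sigma_{\mathrm{pp}}(U)$ implies $\bar z\in\sigma_{\mathrm{pp}}(U)$.
   Context: A $C^*$-dynamical system $(\mathfrak A,\alpha,\omega)$ consists of a $C^*$-algebra $\mathfrak A$, an automorphism $\alpha$ of $\mathfrak A$, and a state $\omega$ on $\mathfrak A$ with $\omega\circ\alpha=\omega$. Its GNS covariant representation $(\mathcal H,\pi,U,\Omega)$ consists of the GNS triple $(\mathcal H,\pi,\Omega)$ of $\omega$ together with the unitary $U$ on $\mathcal H$ determined by $U\pi(A)\Omega=\pi(\alpha(A))\Omega$; thus $U\pi(A)U^*=\pi(\alpha(A))$ and $U\Omega=\Omega$. $M:=\pi(\mathfrak A)''$ and $M'$ is its commutant. For $z\in\mathbb T$, $E_z$ denotes the orthogonal projection onto the eigenspace $\{x\in\mathcal H: Ux=zx\}$, $\sigma_{\mathrm{pp}}(U)$ is the set of eigenvalues of $U$, $M_z:=\{A\in M: UAU^*=zA\}$ and $(M')_z:=\{B\in M': UBU^*=zB\}$. *)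

theory Defs
  imports "HOL-Analysis.Analysis"
begin

section \<open>Abstract C*-algebras (carrier = the whole type 'a)\<close>

record 'a cstar_alg =
  cadd   :: "'a \<Rightarrow> 'a \<Rightarrow> 'a"
  czero  :: "'a"
  csmult :: "complex \<Rightarrow> 'a \<Rightarrow> 'a"
  cmult  :: "'a \<Rightarrow> 'a \<Rightarrow> 'a"
  cstar  :: "'a \<Rightarrow> 'a"
  cnorm  :: "'a \<Rightarrow> real"

definition cstar_algebra :: "'a cstar_alg \<Rightarrow> bool" where
  "cstar_algebra A \<longleftrightarrow>
     \<comment> \<open>complex vector space\<close>
     (\<forall>a b c. cadd A (cadd A a b) c = cadd A a (cadd A b c)) \<and>
     (\<forall>a b. cadd A a b = cadd A b a) \<and>
     (\<forall>a. cadd A a (czero A) = a) \<and>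
     (\<forall>a. cadd A a (csmult A (-1) a) = czero A) \<and>
     (\<forall>a. csmult A 1 a = a) \<and>
     (\<forall>c d a. csmult A (c * d) a = csmult A c (csmult A d a)) \<and>
     (\<forall>c d a. csmult A (c + d) a = cadd A (csmult A c a) (csmult A d a)) \<and>
     (\<forall>c a b. csmult A c (cadd A a b) = cadd A (csmult A c a) (csmult A c b)) \<and>
     \<comment> \<open>associative algebra\<close>
     (\<forall>a b c. cmult A (cmult A a b) c = cmult A a (cmult A b c)) \<and>
     (\<forall>a b c. cmult A (cadd A a b) c = cadd A (cmult A a c) (cmult A b c)) \<and>
     (\<forall>a b c. cmult A a (cadd A b c) = cadd A (cmult A a b) (cmult A a c)) \<and>
     (\<forall>k a b. cmult A (csmult A k a) b = csmult A k (cmult A a b)) \<and>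
     (\<forall>k a b. cmult A a (csmult A k b) = csmult A k (cmult A a b)) \<and>
     \<comment> \<open>involution\<close>
     (\<forall>a. cstar A (cstar A a) = a) \<and>
     (\<forall>a b. cstar A (cadd A a b) = cadd A (cstar A a) (cstar A b)) \<and>
     (\<forall>k a. cstar A (csmult A k a) = csmult A (cnj k) (cstar A a)) \<and>
     (\<forall>a b. cstar A (cmult A a b) = cmult A (cstar A b) (cstar A a)) \<and>
     \<comment> \<open>norm\<close>
     (\<forall>a. cnorm A a \<ge> 0) \<and>
     (\<forall>a. cnorm A a = 0 \<longleftrightarrow> a = czero A) \<and>
     (\<forall>a b. cnorm A (cadd A a b) \<le> cnorm A a + cnorm A b) \<and>
     (\<forall>k a. cnorm A (csmult A k a) = cmod k * cnorm A a) \<and>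
     (\<forall>a b. cnorm A (cmult A a b) \<le> cnorm A a * cnorm A b) \<and>
     (\<forall>a. cnorm A (cmult A (cstar A a) a) = (cnorm A a)\<^sup>2) \<and>
     \<comment> \<open>completeness\<close>
     (\<forall>f :: nat \<Rightarrow> 'a.
        (\<forall>e>0. \<exists>N. \<forall>m\<ge>N. \<forall>n\<ge>N. cnorm A (cadd A (f m) (csmult A (-1) (f n))) < e) \<longrightarrow>
        (\<exists>l. \<forall>e>0. \<exists>N. \<forall>n\<ge>N. cnorm A (cadd A (f n) (csmult A (-1) l)) < e))"

definition star_automorphism :: "'a cstar_alg \<Rightarrow> ('a \<Rightarrow> 'a) \<Rightarrow> bool" where
  "star_automorphism A \<alpha> \<longleftrightarrow> bij \<alpha> \<and>
     (\<forall>a b. \<alpha> (cadd A a b) = cadd A (\<alpha> a) (\<alpha> b)) \<and>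
     (\<forall>k a. \<alpha> (csmult A k a) = csmult A k (\<alpha> a)) \<and>
     (\<forall>a b. \<alpha> (cmult A a b) = cmult A (\<alpha> a) (\<alpha> b)) \<and>
     (\<forall>a. \<alpha> (cstar A a) = cstar A (\<alpha> a))"

definition cstate :: "'a cstar_alg \<Rightarrow> ('a \<Rightarrow> complex) \<Rightarrow> bool" where
  "cstate A \<omega> \<longleftrightarrow>
     (\<forall>a b. \<omega> (cadd A a b) = \<omega> a + \<omega> b) \<and>
     (\<forall>k a. \<omega> (csmult A k a) = k * \<omega> a) \<and>
     (\<forall>a. Im (\<omega> (cmult A (cstar A a) a)) = 0 \<and> Re (\<omega> (cmult A (cstar A a) a)) \<ge> 0) \<and>
     Sup ((\<lambda>a. cmod (\<omega> a)) ` {a. cnorm A a \<le> 1}) = 1"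

definition cstar_dynamical_system :: "'a cstar_alg \<Rightarrow> ('a \<Rightarrow> 'a) \<Rightarrow> ('a \<Rightarrow> complex) \<Rightarrow> bool" where
  "cstar_dynamical_system A \<alpha> \<omega> \<longleftrightarrow>
     cstar_algebra A \<and> star_automorphism A \<alpha> \<and> cstate A \<omega> \<and> (\<forall>a. \<omega> (\<alpha> a) = \<omega> a)"

text \<open>A complex Hilbert space is represented as a real Hilbert space (type of class
  real_inner + complete_space) together with an orthogonal complex structure J
  (multiplication by the imaginary unit).\<close>

definition complex_structure :: "('h::real_inner \<Rightarrow> 'h) \<Rightarrow> bool" where
  "complex_structure J \<longleftrightarrow> bounded_linear J \<and> (\<forall>x. J (J x) = - x) \<and> (\<forall>x y. inner (J x) (J y) = inner x y)"

definition cscale :: "('h::real_inner \<Rightarrow> 'h) \<Rightarrow> complex \<Rightarrow> 'h \<Rightarrow> 'h" where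
  "cscale J z x = Re z *\<^sub>R x + Im z *\<^sub>R J x"

text \<open>Complex inner product, conjugate-linear in the first, linear in the second argument.\<close>
definition cinner :: "('h::real_inner \<Rightarrow> 'h) \<Rightarrow> 'h \<Rightarrow> 'h \<Rightarrow> complex" where
  "cinner J x y = Complex (inner x y) (- inner x (J y))"

definition cbounded :: "('h::real_inner \<Rightarrow> 'h) \<Rightarrow> ('h \<Rightarrow> 'h) \<Rightarrow> bool" where
  "cbounded J T \<longleftrightarrow> bounded_linear T \<and> (\<forall>x. T (J x) = J (T x))"

definition unitary_op :: "('h::real_inner \<Rightarrow> 'h) \<Rightarrow> ('h \<Rightarrow> 'h) \<Rightarrow> bool" where
  "unitary_op J U \<longleftrightarrow> cbounded J U \<and> surj U \<and> (\<forall>x. norm (U x) = norm x)"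

definition commutant :: "('h::real_inner \<Rightarrow> 'h) \<Rightarrow> ('h \<Rightarrow> 'h) set \<Rightarrow> ('h \<Rightarrow> 'h) set" where
  "commutant J S = {T. cbounded J T \<and> (\<forall>A\<in>S. T \<circ> A = A \<circ> T)}"

definition gns_covariant_rep ::
  "'a cstar_alg \<Rightarrow> ('a \<Rightarrow> 'a) \<Rightarrow> ('a \<Rightarrow> complex) \<Rightarrow>
   ('h::{real_inner,complete_space} \<Rightarrow> 'h) \<Rightarrow> ('a \<Rightarrow> 'h \<Rightarrow> 'h) \<Rightarrow> ('h \<Rightarrow> 'h) \<Rightarrow> 'h \<Rightarrow> bool" where
  "gns_covariant_rep A \<alpha> \<omega> J \<pi> U \<Omega> \<longleftrightarrow>
     complex_structure J \<and>
     \<comment> \<open>\<pi> is a *-representation by bounded operators\<close>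
     (\<forall>a. cbounded J (\<pi> a)) \<and>
     (\<forall>a b. \<pi> (cadd A a b) = (\<lambda>x. \<pi> a x + \<pi> b x)) \<and>
     (\<forall>k a. \<pi> (csmult A k a) = cscale J k \<circ> \<pi> a) \<and>
     (\<forall>a b. \<pi> (cmult A a b) = \<pi> a \<circ> \<pi> b) \<and>
     (\<forall>a. \<pi> (cstar A a) = adjoint (\<pi> a)) \<and>
     \<comment> \<open>GNS triple: \<Omega> cyclic and implements \<omega>\<close>
     closure (range (\<lambda>a. \<pi> a \<Omega>)) = UNIV \<and>
     (\<forall>a. \<omega> a = cinner J \<Omega> (\<pi> a \<Omega>)) \<and>
     \<comment> \<open>implementing unitary\<close>
     unitary_op J U \<and>
     (\<forall>a. U (\<pi> a \<Omega>) = \<pi> (\<alpha> a) \<Omega>)"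

definition eigenspace_U :: "('h::real_inner \<Rightarrow> 'h) \<Rightarrow> ('h \<Rightarrow> 'h) \<Rightarrow> complex \<Rightarrow> 'h set" where
  "eigenspace_U J U z = {x. U x = cscale J z x}"

definition point_spectrum :: "('h::real_inner \<Rightarrow> 'h) \<Rightarrow> ('h \<Rightarrow> 'h) \<Rightarrow> complex set" where
  "point_spectrum J U = {z. \<exists>x. x \<noteq> 0 \<and> U x = cscale J z x}"

definition spectral_subspace ::
  "('h::real_inner \<Rightarrow> 'h) \<Rightarrow> ('h \<Rightarrow> 'h) \<Rightarrow> ('h \<Rightarrow> 'h) set \<Rightarrow> complex \<Rightarrow> ('h \<Rightarrow> 'h) set" where
  "spectral_subspace J U X z = {T \<in> X. U \<circ> T \<circ> adjoint U = cscale J z \<circ> T}"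

end

theory Submission
  imports Defs
begin

text \<open>
  Fix \<open>z\<close> with \<open>cmod z = 1\<close> and \<open>A \<in> M\<close>. The Cesaro means \<open>T\<^sub>N\<close> of the operators
  \<open>cnj z ^ n \<cdot> U\<^sup>n A U\<^sup>-\<^sup>n\<close> commute with \<open>M'\<close>, and the vectors \<open>T\<^sub>N \<Omega>\<close> are the ergodic averages of
  \<open>A \<Omega>\<close> under the contraction \<open>cnj z \<cdot> U\<close>, which converge by von Neumann's mean ergodic
  theorem. As \<open>\<Omega>\<close> is separating for \<open>M\<close> it is cyclic for \<open>M'\<close>, so the uniformly bounded
  \<open>T\<^sub>N\<close> converge strongly, to some \<open>T \<in> M'' = M\<close> with \<open>U T U\<^sup>* = z T\<close>. Averaging fixes
  every \<open>z\<close>-eigenvector \<open>x\<close> and does not increase norms, so \<open>T \<Omega>\<close> is at least as close to \<open>x\<close>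
  as \<open>A \<Omega>\<close>; since \<open>\<Omega>\<close> is cyclic for \<open>M\<close>, \<open>M\<^sub>z \<Omega>\<close> is dense in the eigenspace. The roles of
  \<open>M\<close> and \<open>M'\<close> are symmetric. Finally, if \<open>z\<close> is an eigenvalue, density provides
  \<open>T \<in> M\<^sub>z\<close> with \<open>T \<Omega> \<noteq> 0\<close>; then \<open>T\<^sup>*\<close> lies in the spectral subspace for \<open>cnj z\<close>, and
  \<open>T\<^sup>* \<Omega> \<noteq> 0\<close> because \<open>\<Omega>\<close> is separating.
\<close>

section \<open>Projections and adjoints in real Hilbert spaces\<close>

lemma Inf_norm_le: "y \<in> C \<Longrightarrow> Inf (norm ` C) \<le> norm y"
  by (rule cInf_lower) (auto intro: bdd_belowI[of _ 0])

lemma Inf_norm_approx: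
  assumes "C \<noteq> {}" "0 < d"
  obtains w where "w \<in> C" "norm w < Inf (norm ` C) + d"
proof -
  have "bdd_below (norm ` C)" by (rule bdd_belowI[of _ 0]) auto
  then have "\<exists>a\<in>norm ` C. a < Inf (norm ` C) + d"
    using cInf_less_iff[of "norm ` C" "Inf (norm ` C) + d"] assms by simp
  then show thesis using that by blast
qed

lemma convex_near_Inf_norm_close:
  fixes C :: "'h::real_inner set"
  assumes "convex C" "C \<noteq> {}" "0 < e"
  obtains d where "d > 0" "\<And>a b. a \<in> C \<Longrightarrow> b \<in> C \<Longrightarrow> norm a \<le> Inf (norm ` C) + d \<Longrightarrow>
    norm b \<le> Inf (norm ` C) + d \<Longrightarrow> norm (a - b) < e"
proof -
  define c where "c = Inf (norm ` C)"
  have "0 \<le> c" unfolding c_def using assms(2) by (auto intro!: cInf_greatest)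
  define d where "d = min 1 (e\<^sup>2 / (8 * (2 * c + 1)))"
  have "d > 0" using assms \<open>0 \<le> c\<close> by (simp add: d_def)
  have "norm (a - b) < e"
    if ab: "a \<in> C" "b \<in> C" "norm a \<le> c + d" "norm b \<le> c + d" for a b
  proof -
    \<comment> \<open>the midpoint lies in \<open>C\<close>, so the parallelogram law bounds \<open>norm (a - b)\<close>\<close>
    have "(1/2) *\<^sub>R (a + b) \<in> C"
      using convexD[OF assms(1) ab(1,2), of "1/2" "1/2"] by (simp add: scaleR_right_distrib)
    then have "2 * c \<le> norm (a + b)" using Inf_norm_le[of "(1/2) *\<^sub>R (a + b)" C] by (simp add: c_def)
    then have "4 * c\<^sup>2 \<le> (norm (a + b))\<^sup>2"
      using \<open>0 \<le> c\<close> power_mono[of "2 * c" "norm (a + b)" 2] by (simp add: power_mult_distrib)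
    moreover have "(norm a)\<^sup>2 \<le> (c + d)\<^sup>2" "(norm b)\<^sup>2 \<le> (c + d)\<^sup>2"
      using ab by (auto intro!: power_mono)
    moreover have "(norm (a - b))\<^sup>2 + (norm (a + b))\<^sup>2 = 2 * (norm a)\<^sup>2 + 2 * (norm b)\<^sup>2"
      by (simp add: power2_norm_eq_inner inner_simps inner_commute)
    ultimately have "(norm (a - b))\<^sup>2 \<le> 4 * (c + d)\<^sup>2 - 4 * c\<^sup>2" by linarith
    also have "\<dots> = 4 * d * (2 * c + d)" by (simp add: power2_eq_square algebra_simps)
    also have "\<dots> \<le> 4 * (e\<^sup>2 / (8 * (2 * c + 1))) * (2 * c + 1)"
      using \<open>0 < d\<close> \<open>0 \<le> c\<close> by (intro mult_mono) (auto simp: d_def)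
    also have "\<dots> = e\<^sup>2 / 2" using \<open>0 \<le> c\<close> by (simp add: field_simps)
    also have "\<dots> < e\<^sup>2" using \<open>0 < e\<close> by simp
    finally show ?thesis using \<open>0 < e\<close> by (simp add: power2_less_imp_less)
  qed
  with \<open>d > 0\<close> show thesis by (rule that) (simp_all add: c_def)
qed

lemma closed_convex_min_norm:
  fixes C :: "'h::{real_inner,complete_space} set"
  assumes "closed C" "convex C" "C \<noteq> {}"
  obtains p where "p \<in> C" "\<And>y. y \<in> C \<Longrightarrow> norm p \<le> norm y"
proof -
  let ?c = "Inf (norm ` C)"
  have "\<forall>n. \<exists>w. w \<in> C \<and> norm w < ?c + inverse (real (Suc n))"
    using Inf_norm_approx[OF assms(3)] by (metis inverse_positive_iff_positive of_nat_0_less_iff zero_less_Suc)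
  then obtain s where s_in: "\<And>n. s n \<in> C" and s_min: "\<And>n. norm (s n) < ?c + inverse (real (Suc n))"
    by metis
  have "Cauchy s"
  proof (rule metric_CauchyI)
    fix e :: real assume "0 < e"
    obtain d where "d > 0" and close: "\<And>a b. a \<in> C \<Longrightarrow> b \<in> C \<Longrightarrow>
        norm a \<le> ?c + d \<Longrightarrow> norm b \<le> ?c + d \<Longrightarrow> norm (a - b) < e"
      using convex_near_Inf_norm_close[OF assms(2,3) \<open>0 < e\<close>] by blast
    obtain N where "inverse (real (Suc N)) < d" using reals_Archimedean[OF \<open>d > 0\<close>] by blast
    have "norm (s n) \<le> ?c + d" if "n \<ge> N" for n
    proof -
      have "inverse (real (Suc n)) \<le> inverse (real (Suc N))" using that by (simp add: field_simps)
      then show ?thesis using s_min[of n] \<open>inverse (real (Suc N)) < d\<close> by linarith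
    qed
    then have "dist (s m) (s n) < e" if "m \<ge> N" "n \<ge> N" for m n
      using close[OF s_in s_in] that by (simp add: dist_norm)
    then show "\<exists>N. \<forall>m\<ge>N. \<forall>n\<ge>N. dist (s m) (s n) < e" by blast
  qed
  then obtain p where "s \<longlonglongrightarrow> p" using Cauchy_convergent_iff convergent_def by blast
  have "p \<in> C" using closed_sequentially[OF assms(1)] s_in \<open>s \<longlonglongrightarrow> p\<close> by blast
  have "(\<lambda>n. norm (s n)) \<longlonglongrightarrow> norm p" by (intro tendsto_intros \<open>s \<longlonglongrightarrow> p\<close>)
  moreover have "(\<lambda>n. ?c + inverse (real (Suc n))) \<longlonglongrightarrow> ?c + 0"
    by (intro tendsto_intros LIMSEQ_inverse_real_of_nat)
  ultimately have "norm p \<le> ?c + 0"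
    by (rule LIMSEQ_le) (use s_min less_imp_le in blast)
  then show thesis using Inf_norm_le \<open>p \<in> C\<close> by (metis add_0_right order_trans that)
qed

lemma closed_convex_nearest_point:
  fixes S :: "'h::{real_inner,complete_space} set"
  assumes "closed S" "convex S" "S \<noteq> {}"
  obtains p where "p \<in> S" "\<And>y. y \<in> S \<Longrightarrow> norm (x - p) \<le> norm (x - y)"
proof -
  have D: "(\<lambda>y. x - y) ` S = (+) x ` uminus ` S" by (simp add: image_image)
  have "closed ((\<lambda>y. x - y) ` S)" "convex ((\<lambda>y. x - y) ` S)"
    unfolding D using assms
    by (simp_all add: closed_translation closed_negations convex_translation convex_negations)
  then obtain q where "q \<in> (\<lambda>y. x - y) ` S" "\<And>w. w \<in> (\<lambda>y. x - y) ` S \<Longrightarrow> norm q \<le> norm w"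
    using closed_convex_min_norm assms(3) by blast
  then show thesis using that by auto
qed

lemma nearest_point_subspace_orthogonal:
  fixes x :: "'h::real_inner"
  assumes "subspace K" "p \<in> K" "\<And>y. y \<in> K \<Longrightarrow> norm (x - p) \<le> norm (x - y)" "k \<in> K"
  shows "inner (x - p) k = 0"
proof (cases "k = 0")
  case False
  define u where "u = x - p"
  define a where "a = inner u k"
  define n where "n = inner k k"
  have "n > 0" using False by (simp add: n_def)
  define t where "t = a / n"
  have "p + t *\<^sub>R k \<in> K" using assms by (simp add: subspace_add subspace_scale)
  then have "norm u \<le> norm (u - t *\<^sub>R k)"
    using assms(3) unfolding u_def by (metis diff_diff_eq)
  then have "(norm u)\<^sup>2 \<le> (norm (u - t *\<^sub>R k))\<^sup>2" by (simp add: power_mono)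
  also have "\<dots> = (norm u)\<^sup>2 - 2 * t * a + t * t * n"
    by (simp add: power2_norm_eq_inner inner_diff_left inner_diff_right inner_commute[of k u]
        a_def n_def algebra_simps)
  also have "t * t * n = t * a" using \<open>n > 0\<close> by (simp add: t_def)
  finally have "0 \<le> - (a * a / n)" by (simp add: t_def)
  then have "a * a \<le> 0" using \<open>n > 0\<close> by (simp add: divide_le_0_iff)
  then show ?thesis by (simp add: a_def u_def flip: power2_eq_square)
qed simp

definition orthogonal_projection :: "'h::real_inner set \<Rightarrow> 'h \<Rightarrow> 'h" where
  "orthogonal_projection K x = (SOME p. p \<in> K \<and> (\<forall>k\<in>K. inner (x - p) k = 0))"

context
  fixes K :: "'h::{real_inner,complete_space} set"
  assumes closed: "closed K" and subspace: "subspace K"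
begin

lemma orthogonal_projection_in: "orthogonal_projection K x \<in> K"
  and orthogonal_projection_orthogonal: "k \<in> K \<Longrightarrow> inner (x - orthogonal_projection K x) k = 0"
proof -
  obtain p where "p \<in> K" "\<And>y. y \<in> K \<Longrightarrow> norm (x - p) \<le> norm (x - y)"
    using closed_convex_nearest_point[OF closed subspace_imp_convex[OF subspace]] subspace
    by (metis empty_iff subspace_0)
  then have "\<exists>p. p \<in> K \<and> (\<forall>k\<in>K. inner (x - p) k = 0)"
    using nearest_point_subspace_orthogonal[OF subspace] by blast
  then have "orthogonal_projection K x \<in> K \<and> (\<forall>k\<in>K. inner (x - orthogonal_projection K x) k = 0)"
    unfolding orthogonal_projection_def by (rule someI_ex)
  then show "orthogonal_projection K x \<in> K" "k \<in> K \<Longrightarrow> inner (x - orthogonal_projection K x) k = 0"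
    by auto
qed

lemma orthogonal_projection_unique:
  assumes "q \<in> K" "\<And>k. k \<in> K \<Longrightarrow> inner (x - q) k = 0"
  shows "orthogonal_projection K x = q"
proof -
  define p where "p = orthogonal_projection K x"
  have "q - p \<in> K" using assms(1) orthogonal_projection_in subspace by (simp add: p_def subspace_diff)
  then have "inner (q - p) (q - p) = inner (x - p) (q - p) - inner (x - q) (q - p)"
    by (simp add: inner_diff_left)
  also have "\<dots> = 0"
    using orthogonal_projection_orthogonal assms(2) \<open>q - p \<in> K\<close> by (simp add: p_def)
  finally show ?thesis by (simp add: p_def)
qed

lemma orthogonal_projection_fixes: "x \<in> K \<Longrightarrow> orthogonal_projection K x = x"
  by (rule orthogonal_projection_unique) simp_all

lemma bounded_linear_orthogonal_projection: "bounded_linear (orthogonal_projection K)"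
proof (rule bounded_linear_intro[where K=1])
  let ?p = "orthogonal_projection K"
  fix x y and r :: real
  show "?p (x + y) = ?p x + ?p y"
  proof (rule orthogonal_projection_unique)
    show "?p x + ?p y \<in> K" using subspace by (simp add: orthogonal_projection_in subspace_add)
    fix k assume "k \<in> K"
    have "(x + y) - (?p x + ?p y) = (x - ?p x) + (y - ?p y)" by simp
    then show "inner ((x + y) - (?p x + ?p y)) k = 0"
      using orthogonal_projection_orthogonal[OF \<open>k \<in> K\<close>] by (simp only: inner_add_left)
  qed
  show "?p (r *\<^sub>R x) = r *\<^sub>R ?p x"
  proof (rule orthogonal_projection_unique)
    show "r *\<^sub>R ?p x \<in> K" using subspace by (simp add: orthogonal_projection_in subspace_scale)
    fix k assume "k \<in> K"
    then show "inner (r *\<^sub>R x - r *\<^sub>R ?p x) k = 0"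
      using orthogonal_projection_orthogonal by (simp flip: scaleR_diff_right)
  qed
  have "inner (x - ?p x) (?p x) = 0" by (intro orthogonal_projection_orthogonal orthogonal_projection_in)
  then have "(norm x)\<^sup>2 = (norm (x - ?p x))\<^sup>2 + (norm (?p x))\<^sup>2"
    using norm_add_Pythagorean[of "x - ?p x" "?p x"] by (simp add: orthogonal_def)
  then show "norm (?p x) \<le> norm x * 1" by (simp add: power2_le_imp_le)
qed

lemma orthogonal_projection_commute:
  assumes "bounded_linear L" "L ` K \<subseteq> K" "L' ` K \<subseteq> K" "\<And>x y. inner (L x) y = inner x (L' y)"
  shows "orthogonal_projection K (L x) = L (orthogonal_projection K x)"
proof (rule orthogonal_projection_unique)
  interpret L: bounded_linear L by fact
  show "L (orthogonal_projection K x) \<in> K" using assms(2) orthogonal_projection_in by blast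
  fix k assume "k \<in> K"
  have "inner (L x - L (orthogonal_projection K x)) k = inner (x - orthogonal_projection K x) (L' k)"
    by (simp add: assms(4) flip: L.diff)
  also have "\<dots> = 0" using assms(3) \<open>k \<in> K\<close> by (intro orthogonal_projection_orthogonal) blast
  finally show "inner (L x - L (orthogonal_projection K x)) k = 0" .
qed

end

lemma riesz_representation:
  fixes f :: "'h::{real_inner,complete_space} \<Rightarrow> real"
  assumes "bounded_linear f"
  obtains u where "\<And>x. f x = inner u x"
proof (cases "\<forall>x. f x = 0")
  case True
  then show thesis by (intro that[of 0]) simp
next
  case False
  then obtain x0 where "f x0 \<noteq> 0" by blast
  interpret bounded_linear f by fact
  define K where "K = {x. f x = 0}"
  have "subspace K" unfolding K_def subspace_def by (simp add: add scale zero)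
  have "closed K" unfolding K_def by (intro closed_Collect_eq continuous_on_const linear_continuous_on assms)
  \<comment> \<open>\<open>v\<close> spans the orthogonal complement of the kernel\<close>
  define v where "v = x0 - orthogonal_projection K x0"
  have v_orth: "\<And>k. k \<in> K \<Longrightarrow> inner v k = 0"
    unfolding v_def by (rule orthogonal_projection_orthogonal[OF \<open>closed K\<close> \<open>subspace K\<close>])
  have "f v = f x0"
    using orthogonal_projection_in[OF \<open>closed K\<close> \<open>subspace K\<close>] by (simp add: v_def diff K_def)
  show thesis
  proof (rule that)
    fix x
    have "x - (f x / f v) *\<^sub>R v \<in> K" using \<open>f v = f x0\<close> \<open>f x0 \<noteq> 0\<close> by (simp add: K_def diff scale)
    then have "inner v (x - (f x / f v) *\<^sub>R v) = 0" by (rule v_orth)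
    then have "inner v x = (f x / f v) * inner v v" by (simp add: inner_diff_right)
    moreover have "inner v v \<noteq> 0" using \<open>f v = f x0\<close> \<open>f x0 \<noteq> 0\<close> by auto
    ultimately show "f x = inner ((f v / inner v v) *\<^sub>R v) x"
      using \<open>f v = f x0\<close> \<open>f x0 \<noteq> 0\<close> by simp
  qed
qed

lemma adjoint_works_hilbert:
  fixes T :: "'a::{real_inner,complete_space} \<Rightarrow> 'b::real_inner"
  assumes "bounded_linear T"
  shows "inner (T x) y = inner x (adjoint T y)"
proof -
  have "\<exists>u. \<forall>x. inner (T x) y = inner u x" for y
    using riesz_representation[OF bounded_linear_compose[OF bounded_linear_inner_left assms]]
    by metis
  then obtain S where "\<And>x y. inner (T x) y = inner x (S y)"
    by (metis inner_commute)
  then show ?thesis using adjoint_unique by metis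
qed

lemma adjoint_works_hilbert':
  fixes T :: "'a::{real_inner,complete_space} \<Rightarrow> 'b::real_inner"
  assumes "bounded_linear T"
  shows "inner (adjoint T y) x = inner y (T x)"
  using adjoint_works_hilbert[OF assms, of x y] by (simp add: inner_commute)

lemma bounded_linear_adjoint:
  fixes T :: "'a::{real_inner,complete_space} \<Rightarrow> 'b::real_inner"
  assumes "bounded_linear T"
  shows "bounded_linear (adjoint T)"
proof -
  interpret bounded_linear T by fact
  obtain K where "K > 0" and K: "\<And>x. norm (T x) \<le> norm x * K" using pos_bounded by blast
  show ?thesis
  proof (rule bounded_linear_intro[where K=K])
    fix a b y and r :: real
    show "adjoint T (a + b) = adjoint T a + adjoint T b" "adjoint T (r *\<^sub>R a) = r *\<^sub>R adjoint T a"
      by (simp_all add: vector_eq_ldot[symmetric] adjoint_works_hilbert[OF assms, symmetric]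
          inner_add_right)
    define w where "w = adjoint T y"
    have "norm w * norm w = inner (T w) y"
      by (simp add: adjoint_works_hilbert[OF assms] w_def flip: power2_eq_square power2_norm_eq_inner)
    also have "\<dots> \<le> norm (T w) * norm y" by (rule norm_cauchy_schwarz)
    also have "\<dots> \<le> norm w * K * norm y" by (intro mult_right_mono K) simp
    finally have "norm w * norm w \<le> norm w * (norm y * K)" by (simp add: ac_simps)
    then show "norm (adjoint T y) \<le> norm y * K"
      using \<open>K > 0\<close> by (cases "w = 0") (auto simp: w_def)
  qed
qed

lemma adjoint_adjoint_hilbert:
  fixes T :: "'a::{real_inner,complete_space} \<Rightarrow> 'b::real_inner"
  assumes "bounded_linear T"
  shows "adjoint (adjoint T) = T"
  by (rule adjoint_unique) (simp add: adjoint_works_hilbert'[OF assms])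

lemma adjoint_compose_hilbert:
  fixes A :: "'b::{real_inner,complete_space} \<Rightarrow> 'c::real_inner"
    and B :: "'a::{real_inner,complete_space} \<Rightarrow> 'b"
  assumes "bounded_linear A" "bounded_linear B"
  shows "adjoint (A \<circ> B) = adjoint B \<circ> adjoint A"
  by (rule adjoint_unique) (simp add: adjoint_works_hilbert[OF assms(1)] adjoint_works_hilbert[OF assms(2)])

lemma bounded_linear_eq_on_dense:
  fixes f g :: "'a::real_normed_vector \<Rightarrow> 'b::real_normed_vector"
  assumes "bounded_linear f" "bounded_linear g" "closure S = UNIV" "\<And>x. x \<in> S \<Longrightarrow> f x = g x"
  shows "f x = g x"
proof -
  have "closure S \<subseteq> {x. f x = g x}"
    using assms by (intro closure_minimal closed_Collect_eq linear_continuous_on) auto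
  then show ?thesis using assms(3) by blast
qed

lemma subspace_closure:
  fixes S :: "'a::real_normed_vector set"
  assumes "subspace S"
  shows "subspace (closure S)"
  unfolding subspace_def
proof (intro conjI ballI allI)
  show "0 \<in> closure S" using assms closure_subset subspace_0 by blast
next
  fix x y assume "x \<in> closure S" "y \<in> closure S"
  then obtain a b where "\<And>n. a n \<in> S" "a \<longlonglongrightarrow> x" "\<And>n. b n \<in> S" "b \<longlonglongrightarrow> y"
    by (auto simp: closure_sequential)
  then show "x + y \<in> closure S" unfolding closure_sequential
    by (intro exI[of _ "\<lambda>n. a n + b n"]) (auto intro: tendsto_add subspace_add[OF assms])
next
  fix c :: real and x assume "x \<in> closure S"
  then obtain a where "\<And>n. a n \<in> S" "a \<longlonglongrightarrow> x" by (auto simp: closure_sequential)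
  then show "c *\<^sub>R x \<in> closure S" unfolding closure_sequential
    by (intro exI[of _ "\<lambda>n. c *\<^sub>R a n"]) (auto intro: tendsto_scaleR subspace_scale[OF assms])
qed

context
  fixes J :: "'h::{real_inner,complete_space} \<Rightarrow> 'h"
  assumes cs: "complex_structure J"
begin

lemma complex_structure_bounded_linear: "bounded_linear J"
  using cs by (simp add: complex_structure_def)

interpretation J: bounded_linear J by (rule complex_structure_bounded_linear)

lemma complex_structure_square [simp]: "J (J x) = - x"
  using cs by (simp add: complex_structure_def)

lemma complex_structure_inner: "inner (J x) y = - inner x (J y)"
proof -
  have "inner (J x) y = inner (J (J x)) (J y)" by (metis cs complex_structure_def)
  then show ?thesis by simp
qed

lemma adjoint_complex_structure: "adjoint J = (\<lambda>y. - J y)"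
  by (rule adjoint_unique) (metis complex_structure_inner inner_minus_right)

lemma bounded_linear_cscale: "bounded_linear (cscale J z)"
  unfolding cscale_def[abs_def]
  by (intro bounded_linear_add bounded_linear_scaleR_right bounded_linear_ident
      bounded_linear_compose[OF bounded_linear_scaleR_right complex_structure_bounded_linear])

lemma cscale_cscale: "cscale J z (cscale J w x) = cscale J (z * w) x"
  by (simp add: cscale_def J.add J.scale algebra_simps)

lemma cscale_one [simp]: "cscale J 1 x = x"
  by (simp add: cscale_def)

lemma norm_cscale: "norm (cscale J z x) = cmod z * norm x"
proof -
  have "(norm (cscale J z x))\<^sup>2 = ((Re z)\<^sup>2 + (Im z)\<^sup>2) * (norm x)\<^sup>2"
    using cs unfolding power2_norm_eq_inner
    by (simp add: cscale_def complex_structure_def inner_add_left inner_add_right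
        complex_structure_inner algebra_simps power2_eq_square)
  also have "\<dots> = (cmod z * norm x)\<^sup>2" by (simp add: cmod_def power_mult_distrib)
  finally show ?thesis by (simp add: power2_eq_iff_nonneg)
qed

lemma adjoint_cscale: "adjoint (cscale J z) = cscale J (cnj z)"
  by (rule adjoint_unique)
    (simp add: cscale_def inner_add_left inner_add_right inner_diff_right complex_structure_inner)

lemma cbounded_commute_cscale:
  assumes "cbounded J T" shows "T (cscale J z x) = cscale J z (T x)"
proof -
  interpret T: bounded_linear T using assms by (simp add: cbounded_def)
  show ?thesis using assms by (simp add: cbounded_def cscale_def T.add T.scale)
qed

lemma cbounded_adjoint:
  assumes "cbounded J T" shows "cbounded J (adjoint T)"
proof -
  have T: "bounded_linear T" using assms by (simp add: cbounded_def)
  have "T \<circ> J = J \<circ> T" using assms by (simp add: cbounded_def fun_eq_iff)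
  then have "adjoint J \<circ> adjoint T = adjoint T \<circ> adjoint J"
    by (metis adjoint_compose_hilbert T complex_structure_bounded_linear)
  then have "J (adjoint T x) = adjoint T (J x)" for x
    using linear_neg[OF bounded_linear.linear[OF bounded_linear_adjoint[OF T]]]
    by (simp add: adjoint_complex_structure fun_eq_iff)
  with T show ?thesis by (simp add: cbounded_def bounded_linear_adjoint)
qed

end

lemma cbounded_compose: "cbounded J A \<Longrightarrow> cbounded J B \<Longrightarrow> cbounded J (A \<circ> B)"
  by (auto simp: cbounded_def comp_def intro: bounded_linear_compose)

lemma cbounded_ident: "cbounded J (\<lambda>x. x)"
  by (simp add: cbounded_def bounded_linear_ident)

context
  fixes J U :: "'h::{real_inner,complete_space} \<Rightarrow> 'h"
  assumes cs: "complex_structure J" and unitary: "unitary_op J U"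
begin

lemma unitary_op_bounded_linear: "bounded_linear U"
  using unitary by (simp add: unitary_op_def cbounded_def)

interpretation U: bounded_linear U by (rule unitary_op_bounded_linear)

lemma unitary_op_inner: "inner (U x) (U y) = inner x y"
  using unitary dot_norm[of "U x" "U y"] dot_norm[of x y] by (simp add: unitary_op_def flip: U.add)

lemma unitary_op_adjoint_inv: "adjoint U = inv U"
proof (rule adjoint_unique, intro allI)
  have "U (inv U y) = y" for y using unitary by (simp add: unitary_op_def surj_f_inv_f)
  then show "inner (U x) y = inner x (inv U y)" for x y
    using unitary_op_inner[of x "inv U y"] by simp
qed

lemma unitary_op_inj: "inj U"
proof (rule injI)
  fix x y assume "U x = U y"
  then have "norm (U (x - y)) = 0" by (simp add: U.diff)
  then have "norm (x - y) = 0" using unitary by (simp only: unitary_op_def)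
  then show "x = y" by simp
qed

lemma unitary_op_adjoint_right [simp]: "U (adjoint U y) = y"
  using unitary by (simp add: unitary_op_def unitary_op_adjoint_inv surj_f_inv_f)

lemma unitary_op_adjoint_left [simp]: "adjoint U (U x) = x"
  by (simp add: unitary_op_adjoint_inv inv_f_f[OF unitary_op_inj])

lemma unitary_op_adjoint: "unitary_op J (adjoint U)"
  unfolding unitary_op_def
proof (intro conjI allI)
  show "cbounded J (adjoint U)" using unitary by (simp add: unitary_op_def cbounded_adjoint[OF cs])
  show "surj (adjoint U)" by (metis surjI unitary_op_adjoint_left)
  show "norm (adjoint U y) = norm y" for y
    using unitary unfolding unitary_op_def by (metis unitary_op_adjoint_right)
qed

lemma unitary_op_eigenvalue_norm:
  assumes "x \<noteq> 0" "U x = cscale J z x"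
  shows "cmod z = 1"
proof -
  have "cmod z * norm x = norm x"
    using assms(2) unitary unfolding unitary_op_def by (metis norm_cscale[OF cs])
  then show ?thesis using assms(1) by simp
qed

end

definition adjoint_closed :: "('h::real_inner \<Rightarrow> 'h) set \<Rightarrow> bool" where
  "adjoint_closed S \<longleftrightarrow> (\<forall>T\<in>S. adjoint T \<in> S)"

definition ad_invariant :: "('h::real_inner \<Rightarrow> 'h) \<Rightarrow> ('h \<Rightarrow> 'h) set \<Rightarrow> bool" where
  "ad_invariant U S \<longleftrightarrow> (\<forall>T\<in>S. U \<circ> T \<circ> adjoint U \<in> S \<and> adjoint U \<circ> T \<circ> U \<in> S)"

lemma commutant_cbounded: "T \<in> commutant J S \<Longrightarrow> cbounded J T"
  by (simp add: commutant_def)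

lemma commutant_commute: "T \<in> commutant J S \<Longrightarrow> R \<in> S \<Longrightarrow> T (R x) = R (T x)"
  by (auto simp: commutant_def fun_eq_iff)

lemma commutant_antimono: "S \<subseteq> S' \<Longrightarrow> commutant J S' \<subseteq> commutant J S"
  by (auto simp: commutant_def)

lemma subset_double_commutant: "(\<And>R. R \<in> S \<Longrightarrow> cbounded J R) \<Longrightarrow> S \<subseteq> commutant J (commutant J S)"
  by (auto simp: commutant_def)

lemma triple_commutant:
  assumes "\<And>R. R \<in> S \<Longrightarrow> cbounded J R"
  shows "commutant J (commutant J (commutant J S)) = commutant J S"
  using assms
  by (intro antisym commutant_antimono subset_double_commutant)
    (auto simp: commutant_def)

lemma ident_in_commutant: "(\<lambda>x. x) \<in> commutant J S"
  by (simp add: commutant_def cbounded_ident comp_def)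

lemma compose_in_commutant:
  "A \<in> commutant J S \<Longrightarrow> B \<in> commutant J S \<Longrightarrow> (\<lambda>x. A (B x)) \<in> commutant J S"
  by (auto simp: commutant_def cbounded_def fun_eq_iff intro: bounded_linear_compose)

lemma commutant_ad_invariant:
  fixes J U :: "'h::{real_inner,complete_space} \<Rightarrow> 'h"
  assumes cs: "complex_structure J" and unitary: "unitary_op J U" and inv: "ad_invariant U S"
  shows "ad_invariant U (commutant J S)"
proof -
  have conj: "P \<circ> T \<circ> Q \<in> commutant J S"
    if "T \<in> commutant J S" "cbounded J P" "cbounded J Q" "\<And>y. P (Q y) = y" "\<And>x. Q (P x) = x"
      "\<And>R. R \<in> S \<Longrightarrow> Q \<circ> R \<circ> P \<in> S"
    for T P Q
  proof -
    have "P (T (Q (R y))) = R (P (T (Q y)))" if "R \<in> S" for R y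
    proof -
      have "P (T (Q (R y))) = P (T ((Q \<circ> R \<circ> P) (Q y)))" by (simp add: \<open>\<And>y. P (Q y) = y\<close>)
      also have "\<dots> = P ((Q \<circ> R \<circ> P) (T (Q y)))"
        using commutant_commute[OF \<open>T \<in> commutant J S\<close>] that
          \<open>\<And>R. R \<in> S \<Longrightarrow> Q \<circ> R \<circ> P \<in> S\<close> by metis
      also have "\<dots> = R (P (T (Q y)))" by (simp add: \<open>\<And>y. P (Q y) = y\<close>)
      finally show ?thesis .
    qed
    then show ?thesis
      using that by (auto simp: commutant_def fun_eq_iff intro!: cbounded_compose)
  qed
  have "cbounded J U" "cbounded J (adjoint U)"
    using unitary unitary_op_adjoint[OF cs unitary] by (simp_all add: unitary_op_def)
  then show ?thesis
    using inv unfolding ad_invariant_def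
    by (auto intro!: conj simp: unitary_op_adjoint_left[OF cs unitary] unitary_op_adjoint_right[OF cs unitary])
qed

context
  fixes J :: "'h::{real_inner,complete_space} \<Rightarrow> 'h"
  assumes cs: "complex_structure J"
begin

lemma complex_structure_in_commutant:
  "(\<And>R. R \<in> S \<Longrightarrow> cbounded J R) \<Longrightarrow> J \<in> commutant J S"
  using complex_structure_bounded_linear[OF cs] by (auto simp: commutant_def cbounded_def fun_eq_iff)

lemma adjoint_closed_commutant:
  assumes "\<And>R. R \<in> S \<Longrightarrow> bounded_linear R" "adjoint_closed S"
  shows "adjoint_closed (commutant J S)"
  unfolding adjoint_closed_def
proof
  fix T assume T: "T \<in> commutant J S"
  then have "bounded_linear T" by (simp add: commutant_def cbounded_def)
  have "adjoint T \<circ> R = R \<circ> adjoint T" if "R \<in> S" for R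
  proof -
    have "adjoint R \<in> S" using assms(2) that by (simp add: adjoint_closed_def)
    then have "T \<circ> adjoint R = adjoint R \<circ> T" using T by (simp add: commutant_def)
    then have "adjoint (T \<circ> adjoint R) = adjoint (adjoint R \<circ> T)" by simp
    then show ?thesis
      using \<open>bounded_linear T\<close> assms(1)[OF that]
      by (simp add: adjoint_compose_hilbert bounded_linear_adjoint adjoint_adjoint_hilbert)
  qed
  then show "adjoint T \<in> commutant J S"
    using cbounded_adjoint[OF cs commutant_cbounded[OF T]] by (simp add: commutant_def)
qed

end

section \<open>Cesaro means and the mean ergodic theorem\<close>

text \<open>Since \<open>1 / 0 = 0\<close>, the mean of no terms is \<open>cesaro_mean f 0 = 0\<close>.\<close>

definition cesaro_mean :: "(nat \<Rightarrow> 'a::real_vector) \<Rightarrow> nat \<Rightarrow> 'a" where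
  "cesaro_mean f N = (1 / real N) *\<^sub>R (\<Sum>n<N. f n)"

lemma cesaro_mean_const: "N > 0 \<Longrightarrow> cesaro_mean (\<lambda>n. x) N = x"
  by (simp add: cesaro_mean_def sum_constant_scaleR)

lemma cesaro_mean_add: "cesaro_mean (\<lambda>n. f n + g n) N = cesaro_mean f N + cesaro_mean g N"
  by (simp add: cesaro_mean_def sum.distrib scaleR_right_distrib)

lemma cesaro_mean_diff: "cesaro_mean (\<lambda>n. f n - g n) N = cesaro_mean f N - cesaro_mean g N"
  by (simp add: cesaro_mean_def sum_subtractf scaleR_diff_right)

lemma cesaro_mean_scaleR: "cesaro_mean (\<lambda>n. c *\<^sub>R f n) N = c *\<^sub>R cesaro_mean f N"
  by (simp add: cesaro_mean_def scaleR_sum_right)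

lemma linear_cesaro_mean: "linear L \<Longrightarrow> L (cesaro_mean f N) = cesaro_mean (\<lambda>n. L (f n)) N"
  by (simp add: cesaro_mean_def linear_scale linear_sum)

lemma bounded_linear_cesaro_mean:
  "(\<And>n. bounded_linear (L n)) \<Longrightarrow> bounded_linear (\<lambda>x. cesaro_mean (\<lambda>n. L n x) N)"
  unfolding cesaro_mean_def
  by (intro bounded_linear_compose[OF bounded_linear_scaleR_right] bounded_linear_sum)

lemma norm_cesaro_mean_le:
  fixes f :: "nat \<Rightarrow> 'a::real_normed_vector"
  assumes "\<And>n. norm (f n) \<le> B"
  shows "norm (cesaro_mean f N) \<le> B"
proof (cases "N = 0")
  case True
  then show ?thesis using order_trans[OF norm_ge_zero assms[of 0]] by (simp add: cesaro_mean_def)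
next
  case False
  have "norm (\<Sum>n<N. f n) \<le> (\<Sum>n<N. norm (f n))" by (rule norm_sum)
  also have "\<dots> \<le> (\<Sum>n<N. B)" by (intro sum_mono assms)
  finally have "norm (\<Sum>n<N. f n) \<le> (\<Sum>n<N. B)" .
  then show ?thesis using False by (simp add: cesaro_mean_def field_simps)
qed

lemma cesaro_mean_shift_tendsto:
  fixes f :: "nat \<Rightarrow> 'a::real_normed_vector"
  assumes "\<And>n. norm (f n) \<le> B"
  shows "(\<lambda>N. cesaro_mean (\<lambda>n. f (Suc n)) N - cesaro_mean f N) \<longlonglongrightarrow> 0"
proof (rule Lim_null_comparison)
  have "cesaro_mean (\<lambda>n. f (Suc n)) N - cesaro_mean f N = (1 / real N) *\<^sub>R (f N - f 0)" for N
    by (simp add: cesaro_mean_def sum_lessThan_telescope flip: scaleR_diff_right sum_subtractf)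
  moreover have "norm (f N - f 0) \<le> 2 * B" for N
    using norm_triangle_ineq4[of "f N" "f 0"] assms[of N] assms[of 0] by linarith
  ultimately show "\<forall>\<^sub>F N in sequentially.
      norm (cesaro_mean (\<lambda>n. f (Suc n)) N - cesaro_mean f N) \<le> 2 * B / real N"
    by (intro always_eventually allI) (simp add: divide_right_mono)
  show "(\<lambda>N. 2 * B / real N) \<longlonglongrightarrow> 0" by (rule lim_const_over_n)
qed

lemma linear_funpow:
  fixes V :: "'a::real_vector \<Rightarrow> 'a"
  assumes "linear V" shows "linear (V ^^ n)"
proof (rule linearI)
  show "(V ^^ n) (x + y) = (V ^^ n) x + (V ^^ n) y" for x y
    by (induction n) (simp_all add: linear_add[OF assms])
  show "(V ^^ n) (c *\<^sub>R x) = c *\<^sub>R (V ^^ n) x" for c x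
    by (induction n) (simp_all add: linear_scale[OF assms])
qed

lemma norm_funpow_le:
  fixes V :: "'a::real_normed_vector \<Rightarrow> 'a"
  assumes "\<And>x. norm (V x) \<le> norm x"
  shows "norm ((V ^^ n) x) \<le> norm x"
proof (induction n)
  case (Suc n)
  show ?case using assms[of "(V ^^ n) x"] Suc.IH by simp
qed simp

lemma norm_funpow_eq:
  fixes V :: "'a::real_normed_vector \<Rightarrow> 'a"
  assumes "\<And>x. norm (V x) = norm x"
  shows "norm ((V ^^ n) x) = norm x"
  by (induction n) (simp_all add: assms)

lemma cesaro_orbit_in_convex:
  fixes V :: "'a::real_vector \<Rightarrow> 'a"
  assumes "convex C" "V ` C \<subseteq> C" "w \<in> C" "N > 0"
  shows "cesaro_mean (\<lambda>n. (V ^^ n) w) N \<in> C"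
proof -
  have orbit: "(V ^^ n) w \<in> C" for n using assms(2,3) by (induction n) auto
  have "cesaro_mean (\<lambda>n. (V ^^ n) w) N = (\<Sum>n<N. (1 / real N) *\<^sub>R (V ^^ n) w)"
    by (simp add: cesaro_mean_def scaleR_sum_right)
  also have "\<dots> \<in> C"
    using convex_sum[OF _ assms(1), of "{..<N}" "\<lambda>_. 1 / real N" "\<lambda>n. (V ^^ n) w"] orbit assms(4)
    by simp
  finally show ?thesis .
qed

lemma cesaro_orbit_hull_asymptotic:
  fixes V :: "'a::real_normed_vector \<Rightarrow> 'a"
  assumes "linear V" "\<And>x. norm (V x) \<le> norm x"
    and "w \<in> convex hull range (\<lambda>n. (V ^^ n) v)"
  shows "(\<lambda>N. cesaro_mean (\<lambda>n. (V ^^ n) w) N - cesaro_mean (\<lambda>n. (V ^^ n) v) N) \<longlonglongrightarrow> 0"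
proof -
  let ?avg = "\<lambda>w N. cesaro_mean (\<lambda>n. (V ^^ n) w) N"
  define P where "P = {w. (\<lambda>N. ?avg w N - ?avg v N) \<longlonglongrightarrow> 0}"
  have "(V ^^ k) v \<in> P" for k
  proof (induction k)
    case (Suc k)
    have "(\<lambda>N. (?avg (V ((V ^^ k) v)) N - ?avg ((V ^^ k) v) N) + (?avg ((V ^^ k) v) N - ?avg v N))
        \<longlonglongrightarrow> 0 + 0"
      using Suc cesaro_mean_shift_tendsto[of "\<lambda>n. (V ^^ n) ((V ^^ k) v)" "norm ((V ^^ k) v)"]
        norm_funpow_le[OF assms(2)]
      unfolding P_def by (intro tendsto_add) (simp_all add: funpow_swap1)
    then show ?case by (simp add: P_def)
  qed (simp add: P_def)
  moreover have "convex P"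
  proof (rule convexI)
    fix a b and s t :: real assume "a \<in> P" "b \<in> P" "0 \<le> s" "0 \<le> t" "s + t = 1"
    have "(\<lambda>N. s *\<^sub>R (?avg a N - ?avg v N) + t *\<^sub>R (?avg b N - ?avg v N)) \<longlonglongrightarrow> s *\<^sub>R 0 + t *\<^sub>R 0"
      using \<open>a \<in> P\<close> \<open>b \<in> P\<close> unfolding P_def by (intro tendsto_intros) auto
    moreover have "s *\<^sub>R (?avg a N - ?avg v N) + t *\<^sub>R (?avg b N - ?avg v N)
        = ?avg (s *\<^sub>R a + t *\<^sub>R b) N - ?avg v N" for N
    proof -
      have "?avg (s *\<^sub>R a + t *\<^sub>R b) N = s *\<^sub>R ?avg a N + t *\<^sub>R ?avg b N"
        using linear_funpow[OF assms(1)]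
        by (simp add: linear_add linear_scale cesaro_mean_add cesaro_mean_scaleR)
      then show ?thesis using \<open>s + t = 1\<close> by (simp add: algebra_simps flip: scaleR_add_left)
    qed
    ultimately show "s *\<^sub>R a + t *\<^sub>R b \<in> P" by (simp add: P_def)
  qed
  ultimately have "convex hull range (\<lambda>n. (V ^^ n) v) \<subseteq> P" by (intro hull_minimal) auto
  then show ?thesis using assms(3) by (auto simp: P_def)
qed

lemma orbit_hull_invariant:
  fixes V :: "'a::real_vector \<Rightarrow> 'a"
  assumes "linear V"
  shows "V ` (convex hull range (\<lambda>n. (V ^^ n) v)) \<subseteq> convex hull range (\<lambda>n. (V ^^ n) v)"
proof -
  have "V ` (convex hull range (\<lambda>n. (V ^^ n) v)) = convex hull (V ` range (\<lambda>n. (V ^^ n) v))"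
    by (rule convex_hull_linear_image[OF assms])
  also have "\<dots> \<subseteq> convex hull range (\<lambda>n. (V ^^ n) v)"
    by (rule hull_mono) (auto simp flip: funpow.simps(2) o_apply[of V])
  finally show ?thesis .
qed

theorem mean_ergodic:
  fixes V :: "'h::{real_inner,complete_space} \<Rightarrow> 'h"
  assumes "linear V" and contraction: "\<And>x. norm (V x) \<le> norm x"
  shows "convergent (\<lambda>N. cesaro_mean (\<lambda>n. (V ^^ n) v) N)"
proof -
  let ?avg = "\<lambda>w N. cesaro_mean (\<lambda>n. (V ^^ n) w) N"
  define C where "C = convex hull range (\<lambda>n. (V ^^ n) v)"
  have "convex C" "C \<noteq> {}" by (simp_all add: C_def hull_inc)
  \<comment> \<open>The means of a point \<open>w \<in> C\<close> of almost minimal norm stay in \<open>C\<close> and do not grow in norm,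
    so they are uniformly close to each other; those of \<open>v\<close> are asymptotic to them.\<close>
  have "Cauchy (?avg v)"
  proof (rule metric_CauchyI)
    fix e :: real assume "0 < e"
    then obtain d where "d > 0" and close: "\<And>a b. a \<in> C \<Longrightarrow> b \<in> C \<Longrightarrow>
        norm a \<le> Inf (norm ` C) + d \<Longrightarrow> norm b \<le> Inf (norm ` C) + d \<Longrightarrow> norm (a - b) < e / 3"
      using convex_near_Inf_norm_close[OF \<open>convex C\<close> \<open>C \<noteq> {}\<close>, of "e / 3"] by auto
    obtain w where "w \<in> C" "norm w < Inf (norm ` C) + d"
      using Inf_norm_approx[OF \<open>C \<noteq> {}\<close> \<open>d > 0\<close>] .
    have "(\<lambda>N. ?avg w N - ?avg v N) \<longlonglongrightarrow> 0"
      using cesaro_orbit_hull_asymptotic[OF assms] \<open>w \<in> C\<close> by (simp add: C_def)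
    from LIMSEQ_D[OF this, of "e / 3"] \<open>0 < e\<close>
    obtain N0 where N0: "\<And>N. N \<ge> N0 \<Longrightarrow> norm (?avg w N - ?avg v N) < e / 3" by auto
    have "dist (?avg v m) (?avg v n) < e" if "m \<ge> max N0 1" "n \<ge> max N0 1" for m n
    proof -
      have "?avg w k \<in> C" "norm (?avg w k) \<le> Inf (norm ` C) + d" if "k > 0" for k
        using cesaro_orbit_in_convex[OF \<open>convex C\<close> _ \<open>w \<in> C\<close> that]
          orbit_hull_invariant[OF assms(1)] \<open>norm w < Inf (norm ` C) + d\<close>
          norm_cesaro_mean_le[of "\<lambda>n. (V ^^ n) w" "norm w" k] norm_funpow_le[OF contraction]
        by (auto simp: C_def)
      then have "norm (?avg w m - ?avg w n) < e / 3" using that by (intro close) auto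
      moreover have "norm (?avg w m - ?avg v m) < e / 3" "norm (?avg w n - ?avg v n) < e / 3"
        using N0 that by auto
      ultimately show ?thesis
        using norm_triangle_lt[of "?avg v m - ?avg w m" "?avg w m - ?avg v n"]
          norm_triangle_ineq[of "?avg w m - ?avg w n" "?avg w n - ?avg v n"]
        by (simp add: dist_norm norm_minus_commute[of "?avg v m"])
    qed
    then show "\<exists>N. \<forall>m\<ge>N. \<forall>n\<ge>N. dist (?avg v m) (?avg v n) < e" by blast
  qed
  then show ?thesis by (simp add: Cauchy_convergent_iff)
qed

section \<open>Strong limits of uniformly bounded operators\<close>

lemma convergent_on_dense_imp_convergent:
  fixes T :: "nat \<Rightarrow> 'a::real_normed_vector \<Rightarrow> 'b::{real_normed_vector,complete_space}"
  assumes "\<And>N. linear (T N)" "\<And>N y. norm (T N y) \<le> K * norm y" "0 \<le> K"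
    and "closure D = UNIV" "\<And>d. d \<in> D \<Longrightarrow> convergent (\<lambda>N. T N d)"
  shows "convergent (\<lambda>N. T N y)"
proof -
  have "Cauchy (\<lambda>N. T N y)"
  proof (rule metric_CauchyI)
    fix e :: real assume "0 < e"
    define r where "r = e / (3 * (K + 1))"
    have "r > 0" using \<open>0 < e\<close> \<open>0 \<le> K\<close> by (simp add: r_def)
    then obtain d where "d \<in> D" "dist d y < r"
      using assms(4) closure_approachable[of y D] by auto
    have "Cauchy (\<lambda>N. T N d)" using assms(5)[OF \<open>d \<in> D\<close>] by (simp add: Cauchy_convergent_iff)
    then obtain N0 where N0: "\<And>m n. m \<ge> N0 \<Longrightarrow> n \<ge> N0 \<Longrightarrow> dist (T m d) (T n d) < e / 3"
      using \<open>0 < e\<close> unfolding Cauchy_def by (metis divide_pos_pos zero_less_numeral)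
    have small: "norm (T n y - T n d) < e / 3" for n
    proof -
      have "norm (T n y - T n d) \<le> K * norm (y - d)"
        using assms(2)[of n "y - d"] by (simp add: linear_diff[OF assms(1)])
      also have "\<dots> \<le> K * r"
        using \<open>dist d y < r\<close> \<open>0 \<le> K\<close> by (intro mult_left_mono) (auto simp: dist_norm norm_minus_commute)
      also have "\<dots> < e / 3"
        using \<open>0 < e\<close> \<open>0 \<le> K\<close> by (simp add: r_def field_simps)
      finally show ?thesis .
    qed
    have "dist (T m y) (T n y) < e" if "m \<ge> N0" "n \<ge> N0" for m n
    proof -
      have "dist (T m y) (T n y) \<le> dist (T m y) (T m d) + dist (T m d) (T n d) + dist (T n d) (T n y)"
        using dist_triangle[of "T m y" "T n y" "T m d"] dist_triangle[of "T m d" "T n y" "T n d"]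
        by linarith
      then show ?thesis
        using small[of m] small[of n] N0[OF that] by (simp add: dist_norm norm_minus_commute[of "T n d"])
    qed
    then show "\<exists>N. \<forall>m\<ge>N. \<forall>n\<ge>N. dist (T m y) (T n y) < e" by blast
  qed
  then show ?thesis by (simp add: Cauchy_convergent_iff)
qed

lemma bounded_linear_strong_limit:
  fixes T :: "nat \<Rightarrow> 'a::real_normed_vector \<Rightarrow> 'b::real_normed_vector"
  assumes "\<And>N. linear (T N)" "\<And>N y. norm (T N y) \<le> K * norm y"
    and lim: "\<And>y. (\<lambda>N. T N y) \<longlonglongrightarrow> L y"
  shows "bounded_linear L"
proof (rule bounded_linear_intro[where K=K])
  fix x y and r :: real
  have "(\<lambda>N. T N (x + y)) \<longlonglongrightarrow> L x + L y" "(\<lambda>N. T N (r *\<^sub>R x)) \<longlonglongrightarrow> r *\<^sub>R L x"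
    using tendsto_add[OF lim lim] tendsto_scaleR[OF tendsto_const lim]
    by (simp_all add: linear_add[OF assms(1)] linear_scale[OF assms(1)])
  then show "L (x + y) = L x + L y" "L (r *\<^sub>R x) = r *\<^sub>R L x"
    using lim LIMSEQ_unique by blast+
  show "norm (L x) \<le> norm x * K"
    by (rule LIMSEQ_le_const2[OF tendsto_norm[OF lim]]) (use assms(2) in \<open>simp add: mult.commute\<close>)
qed

section \<open>Spectral subspaces\<close>

lemma cbounded_funpow:
  fixes V :: "'h::real_inner \<Rightarrow> 'h"
  assumes "cbounded J V" shows "cbounded J (V ^^ n)"
proof (induction n)
  case 0
  show ?case using cbounded_ident[of J] by (simp add: id_def)
next
  case (Suc n)
  show ?case using cbounded_compose[OF assms Suc.IH] by (simp add: comp_def)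
qed

lemma ad_funpow_in:
  assumes "T \<in> X" "\<And>T. T \<in> X \<Longrightarrow> U \<circ> T \<circ> adjoint U \<in> X"
  shows "(\<lambda>y. (U ^^ n) (T ((adjoint U ^^ n) y))) \<in> X"
proof (induction n)
  case 0
  show ?case using assms(1) by simp
next
  case (Suc n)
  have "(\<lambda>y. (U ^^ Suc n) (T ((adjoint U ^^ Suc n) y)))
      = U \<circ> (\<lambda>y. (U ^^ n) (T ((adjoint U ^^ n) y))) \<circ> adjoint U"
    by (simp add: fun_eq_iff funpow_swap1)
  then show ?case using assms(2)[OF Suc.IH] by simp
qed

definition twisted_conj ::
  "('h::real_inner \<Rightarrow> 'h) \<Rightarrow> ('h \<Rightarrow> 'h) \<Rightarrow> complex \<Rightarrow> ('h \<Rightarrow> 'h) \<Rightarrow> nat \<Rightarrow> 'h \<Rightarrow> 'h" where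
  "twisted_conj J U z A n y = cscale J (cnj z ^ n) ((U ^^ n) (A ((adjoint U ^^ n) y)))"

definition spectral_average ::
  "('h::real_inner \<Rightarrow> 'h) \<Rightarrow> ('h \<Rightarrow> 'h) \<Rightarrow> complex \<Rightarrow> ('h \<Rightarrow> 'h) \<Rightarrow> nat \<Rightarrow> 'h \<Rightarrow> 'h" where
  "spectral_average J U z A N y = cesaro_mean (\<lambda>n. twisted_conj J U z A n y) N"

context
  fixes J U :: "'h::{real_inner,complete_space} \<Rightarrow> 'h" and z :: complex
  assumes cs: "complex_structure J" and unitary: "unitary_op J U" and z: "cmod z = 1"
begin

private lemma cbounded_U: "cbounded J U" "cbounded J (adjoint U)"
  using unitary unitary_op_adjoint[OF cs unitary] by (simp_all add: unitary_op_def)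

private lemma norm_U_power: "norm ((U ^^ n) x) = norm x" "norm ((adjoint U ^^ n) x) = norm x"
  using unitary unitary_op_adjoint[OF cs unitary]
  by (intro norm_funpow_eq, simp add: unitary_op_def)+

lemma twisted_conj_bounded:
  assumes "cbounded J A"
  shows "bounded_linear (twisted_conj J U z A n)"
proof -
  have "bounded_linear (U ^^ n)" "bounded_linear A" "bounded_linear (adjoint U ^^ n)"
    using assms cbounded_funpow[OF cbounded_U(1)] cbounded_funpow[OF cbounded_U(2)]
    by (simp_all add: cbounded_def)
  then have "bounded_linear (\<lambda>y. (U ^^ n) (A ((adjoint U ^^ n) y)))"
    by (metis bounded_linear_compose)
  then show ?thesis
    unfolding twisted_conj_def[abs_def] by (rule bounded_linear_compose[OF bounded_linear_cscale[OF cs]])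
qed

lemma norm_twisted_conj_le:
  assumes "\<And>y. norm (A y) \<le> K * norm y"
  shows "norm (twisted_conj J U z A n y) \<le> K * norm y"
  using assms[of "(adjoint U ^^ n) y"]
  by (simp add: twisted_conj_def norm_cscale[OF cs] norm_power z norm_U_power)

lemma twisted_conj_shift:
  "U (twisted_conj J U z A n (adjoint U y)) = cscale J z (twisted_conj J U z A (Suc n) y)"
proof -
  have "z * cnj z = 1" using z complex_norm_square[of z] by simp
  then show ?thesis
    by (simp add: twisted_conj_def cbounded_commute_cscale[OF cs cbounded_U(1)] cscale_cscale[OF cs]
        funpow_swap1 mult.assoc[symmetric])
qed

lemma spectral_average_bounded:
  assumes "cbounded J A"
  shows "bounded_linear (spectral_average J U z A N)"
  unfolding spectral_average_def[abs_def]
  by (rule bounded_linear_cesaro_mean[OF twisted_conj_bounded[OF assms]])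

lemma norm_spectral_average_le:
  assumes "\<And>y. norm (A y) \<le> K * norm y"
  shows "norm (spectral_average J U z A N y) \<le> K * norm y"
  unfolding spectral_average_def by (intro norm_cesaro_mean_le norm_twisted_conj_le assms)

lemma spectral_average_commute:
  assumes "A \<in> X" "\<And>T. T \<in> X \<Longrightarrow> U \<circ> T \<circ> adjoint U \<in> X" "C \<in> commutant J X"
  shows "spectral_average J U z A N (C y) = C (spectral_average J U z A N y)"
proof -
  have C: "cbounded J C" using assms(3) by (rule commutant_cbounded)
  have "twisted_conj J U z A n (C y) = C (twisted_conj J U z A n y)" for n
    using commutant_commute[OF assms(3) ad_funpow_in[OF assms(1,2)], of n]
    by (simp add: twisted_conj_def cbounded_commute_cscale[OF cs C])
  then show ?thesis
    using C by (simp add: spectral_average_def linear_cesaro_mean cbounded_def bounded_linear.linear)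
qed

lemma spectral_average_covariance_tendsto:
  assumes "\<And>y. norm (A y) \<le> K * norm y"
  shows "(\<lambda>N. U (spectral_average J U z A N (adjoint U y)) - cscale J z (spectral_average J U z A N y))
    \<longlonglongrightarrow> 0"
proof -
  interpret zJ: bounded_linear "cscale J z" by (rule bounded_linear_cscale[OF cs])
  let ?f = "\<lambda>n. twisted_conj J U z A n y"
  have "U (spectral_average J U z A N (adjoint U y)) - cscale J z (spectral_average J U z A N y)
      = cscale J z (cesaro_mean (\<lambda>n. ?f (Suc n)) N - cesaro_mean ?f N)" for N
    using cbounded_U(1)
    by (simp add: spectral_average_def linear_cesaro_mean cbounded_def bounded_linear.linear
        twisted_conj_shift zJ.linear zJ.diff)
  moreover have "(\<lambda>N. cscale J z (cesaro_mean (\<lambda>n. ?f (Suc n)) N - cesaro_mean ?f N)) \<longlonglongrightarrow> cscale J z 0"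
    by (intro zJ.tendsto cesaro_mean_shift_tendsto[where B="K * norm y"] norm_twisted_conj_le assms)
  ultimately show ?thesis by simp
qed

lemma spectral_average_cyclic:
  assumes "U \<Omega> = \<Omega>"
  shows "spectral_average J U z A N \<Omega> = cesaro_mean (\<lambda>n. ((cscale J (cnj z) \<circ> U) ^^ n) (A \<Omega>)) N"
proof -
  have "adjoint U \<Omega> = \<Omega>" using assms unitary_op_adjoint_left[OF cs unitary, of \<Omega>] by simp
  then have W: "(adjoint U ^^ n) \<Omega> = \<Omega>" for n by (induction n) simp_all
  have V: "((cscale J (cnj z) \<circ> U) ^^ n) x = cscale J (cnj z ^ n) ((U ^^ n) x)" for n x
    by (induction n)
      (simp_all add: cbounded_commute_cscale[OF cs cbounded_U(1)] cscale_cscale[OF cs] cscale_one[OF cs])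
  show ?thesis by (simp add: spectral_average_def twisted_conj_def W V)
qed

lemma spectral_average_cyclic_convergent:
  assumes "U \<Omega> = \<Omega>"
  shows "convergent (\<lambda>N. spectral_average J U z A N \<Omega>)"
  unfolding spectral_average_cyclic[OF assms]
proof (rule mean_ergodic)
  show "linear (cscale J (cnj z) \<circ> U)"
    using bounded_linear_cscale[OF cs] cbounded_U(1)
    by (intro linear_compose bounded_linear.linear) (simp_all add: cbounded_def)
  show "norm ((cscale J (cnj z) \<circ> U) x) \<le> norm x" for x
    using unitary z by (simp add: norm_cscale[OF cs] unitary_op_def)
qed

lemma spectral_average_approx_eigenvector:
  assumes "U \<Omega> = \<Omega>" "U x = cscale J z x" "N > 0"
  shows "norm (spectral_average J U z A N \<Omega> - x) \<le> norm (A \<Omega> - x)"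
proof -
  define V where "V = cscale J (cnj z) \<circ> U"
  have "linear V"
    using bounded_linear_cscale[OF cs] cbounded_U(1)
    by (auto simp: V_def cbounded_def intro: linear_compose bounded_linear.linear)
  have "V x = x"
    using assms(2) z complex_norm_square[of z]
    by (simp add: V_def cscale_cscale[OF cs] cscale_one[OF cs] mult.commute)
  then have "(V ^^ n) x = x" for n by (induction n) simp_all
  then have "spectral_average J U z A N \<Omega> - x = cesaro_mean (\<lambda>n. (V ^^ n) (A \<Omega> - x)) N"
    using assms(3) linear_funpow[OF \<open>linear V\<close>]
    by (simp add: spectral_average_cyclic[OF assms(1)] V_def[symmetric] linear_diff cesaro_mean_diff
        cesaro_mean_const)
  also have "norm \<dots> \<le> norm (A \<Omega> - x)"
    using unitary z
    by (intro norm_cesaro_mean_le norm_funpow_le) (simp add: V_def norm_cscale[OF cs] unitary_op_def)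
  finally show ?thesis .
qed

end

lemma spectral_average_strong_limit:
  fixes J U :: "'h::{real_inner,complete_space} \<Rightarrow> 'h"
  assumes cs: "complex_structure J" and unitary: "unitary_op J U" and z: "cmod z = 1"
    and "U \<Omega> = \<Omega>" and X_ad: "\<And>T. T \<in> X \<Longrightarrow> U \<circ> T \<circ> adjoint U \<in> X"
    and cyclic': "closure ((\<lambda>C. C \<Omega>) ` commutant J X) = UNIV"
    and "A \<in> X" "cbounded J A"
  obtains T where "bounded_linear T" "\<And>y. (\<lambda>N. spectral_average J U z A N y) \<longlonglongrightarrow> T y"
proof -
  let ?S = "spectral_average J U z A"
  obtain K where "K > 0" and bound: "\<And>y. norm (A y) \<le> K * norm y"
    using bounded_linear.pos_bounded[of A] \<open>cbounded J A\<close> by (auto simp: cbounded_def mult.commute)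
  have lin: "linear (?S N)" for N
    by (rule bounded_linear.linear[OF spectral_average_bounded[OF cs unitary z \<open>cbounded J A\<close>]])
  note bound_S = norm_spectral_average_le[OF cs unitary z bound]
  \<comment> \<open>convergence on the dense set \<open>X' \<Omega>\<close> reduces to convergence at \<open>\<Omega>\<close>,
    i.e. to the mean ergodic theorem\<close>
  have "convergent (\<lambda>N. ?S N d)" if d: "d \<in> (\<lambda>C. C \<Omega>) ` commutant J X" for d
  proof -
    obtain C where C: "C \<in> commutant J X" "d = C \<Omega>" using d by blast
    obtain L where "(\<lambda>N. ?S N \<Omega>) \<longlonglongrightarrow> L"
      using spectral_average_cyclic_convergent[OF cs unitary z \<open>U \<Omega> = \<Omega>\<close>] by (auto simp: convergent_def)
    moreover have "bounded_linear C" using commutant_cbounded[OF C(1)] by (simp add: cbounded_def)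
    ultimately have "(\<lambda>N. C (?S N \<Omega>)) \<longlonglongrightarrow> C L" by (metis bounded_linear.tendsto)
    then show ?thesis
      using spectral_average_commute[OF cs unitary z \<open>A \<in> X\<close> X_ad C(1)] C(2)
      by (auto simp: convergent_def)
  qed
  then have "convergent (\<lambda>N. ?S N y)" for y
    using convergent_on_dense_imp_convergent[OF lin bound_S _ cyclic'] \<open>K > 0\<close> by simp
  then obtain T where lim: "\<And>y. (\<lambda>N. ?S N y) \<longlonglongrightarrow> T y" unfolding convergent_def by metis
  then show thesis using that bounded_linear_strong_limit[OF lin bound_S lim] by blast
qed

lemma spectral_subspace_approx:
  fixes J U :: "'h::{real_inner,complete_space} \<Rightarrow> 'h"
  assumes cs: "complex_structure J" and unitary: "unitary_op J U" and z: "cmod z = 1"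
    and "U \<Omega> = \<Omega>" and X_cb: "\<And>T. T \<in> X \<Longrightarrow> cbounded J T"
    and X_ad: "\<And>T. T \<in> X \<Longrightarrow> U \<circ> T \<circ> adjoint U \<in> X"
    and cyclic': "closure ((\<lambda>C. C \<Omega>) ` commutant J X) = UNIV"
    and "A \<in> X" "U x = cscale J z x"
  obtains T where "T \<in> commutant J (commutant J X)" "U \<circ> T \<circ> adjoint U = cscale J z \<circ> T"
    "norm (T \<Omega> - x) \<le> norm (A \<Omega> - x)"
proof -
  let ?S = "spectral_average J U z A"
  have A: "cbounded J A" using X_cb \<open>A \<in> X\<close> .
  obtain T where "bounded_linear T" and lim: "\<And>y. (\<lambda>N. ?S N y) \<longlonglongrightarrow> T y"
    using spectral_average_strong_limit[OF cs unitary z \<open>U \<Omega> = \<Omega>\<close> X_ad cyclic' \<open>A \<in> X\<close> A] by blast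
  have "T (C y) = C (T y)" if "C \<in> commutant J X" for C y
  proof (rule LIMSEQ_unique[OF lim])
    have "bounded_linear C" using commutant_cbounded[OF that] by (simp add: cbounded_def)
    then show "(\<lambda>N. ?S N (C y)) \<longlonglongrightarrow> C (T y)"
      using spectral_average_commute[OF cs unitary z \<open>A \<in> X\<close> X_ad that]
        bounded_linear.tendsto[OF _ lim] by simp
  qed
  with \<open>bounded_linear T\<close> complex_structure_in_commutant[OF cs X_cb]
  have "T \<in> commutant J (commutant J X)" by (auto simp: commutant_def cbounded_def fun_eq_iff)
  moreover have "U (T (adjoint U y)) = cscale J z (T y)" for y
  proof -
    obtain K where bound: "\<And>y. norm (A y) \<le> K * norm y"
      using bounded_linear.pos_bounded[of A] A by (auto simp: cbounded_def mult.commute)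
    have "(\<lambda>N. U (?S N (adjoint U y)) - cscale J z (?S N y))
        \<longlonglongrightarrow> U (T (adjoint U y)) - cscale J z (T y)"
      using bounded_linear.tendsto[OF unitary_op_bounded_linear[OF cs unitary] lim]
        bounded_linear.tendsto[OF bounded_linear_cscale[OF cs] lim]
      by (rule tendsto_diff)
    then show ?thesis
      using spectral_average_covariance_tendsto[OF cs unitary z bound] LIMSEQ_unique by force
  qed
  moreover have "norm (T \<Omega> - x) \<le> norm (A \<Omega> - x)"
    by (rule LIMSEQ_le_const2[OF tendsto_norm[OF tendsto_diff[OF lim tendsto_const]]])
      (use spectral_average_approx_eigenvector[OF cs unitary z \<open>U \<Omega> = \<Omega>\<close> \<open>U x = cscale J z x\<close>]
        in \<open>auto intro: exI[of _ 1]\<close>)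
  ultimately show thesis by (intro that) (auto simp: fun_eq_iff)
qed

lemma spectral_subspace_eigenvector:
  fixes J U :: "'h::{real_inner,complete_space} \<Rightarrow> 'h"
  assumes cs: "complex_structure J" and unitary: "unitary_op J U"
    and "U \<Omega> = \<Omega>" "T \<in> spectral_subspace J U X z"
  shows "T \<Omega> \<in> eigenspace_U J U z"
proof -
  have "adjoint U \<Omega> = \<Omega>" using unitary_op_adjoint_left[OF cs unitary, of \<Omega>] \<open>U \<Omega> = \<Omega>\<close> by simp
  moreover have "U (T (adjoint U \<Omega>)) = cscale J z (T \<Omega>)"
    using assms(4) unfolding spectral_subspace_def by (auto dest: fun_cong[where x=\<Omega>])
  ultimately show ?thesis by (simp add: eigenspace_U_def)
qed

lemma closure_spectral_subspace_commutant:
  fixes J U :: "'h::{real_inner,complete_space} \<Rightarrow> 'h"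
  assumes cs: "complex_structure J" and unitary: "unitary_op J U" and z: "cmod z = 1"
    and "U \<Omega> = \<Omega>" and S_cb: "\<And>R. R \<in> S \<Longrightarrow> cbounded J R" and "ad_invariant U S"
    and cyclic: "closure ((\<lambda>T. T \<Omega>) ` commutant J S) = UNIV"
    and cyclic': "closure ((\<lambda>C. C \<Omega>) ` commutant J (commutant J S)) = UNIV"
  defines "X \<equiv> commutant J S"
  shows "closure ((\<lambda>T. T \<Omega>) ` spectral_subspace J U X z) = eigenspace_U J U z"
proof
  have X_cb: "\<And>T. T \<in> X \<Longrightarrow> cbounded J T" by (simp add: X_def commutant_cbounded)
  have X_ad: "\<And>T. T \<in> X \<Longrightarrow> U \<circ> T \<circ> adjoint U \<in> X"
    using commutant_ad_invariant[OF cs unitary \<open>ad_invariant U S\<close>] by (simp add: X_def ad_invariant_def)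
  have vN: "commutant J (commutant J X) = X" unfolding X_def by (rule triple_commutant[OF S_cb])
  have "closed (eigenspace_U J U z)"
    unfolding eigenspace_U_def
    using unitary_op_bounded_linear[OF cs unitary] bounded_linear_cscale[OF cs]
    by (intro closed_Collect_eq linear_continuous_on)
  then show "closure ((\<lambda>T. T \<Omega>) ` spectral_subspace J U X z) \<subseteq> eigenspace_U J U z"
    using spectral_subspace_eigenvector[OF cs unitary \<open>U \<Omega> = \<Omega>\<close>]
    by (intro closure_minimal) auto
  show "eigenspace_U J U z \<subseteq> closure ((\<lambda>T. T \<Omega>) ` spectral_subspace J U X z)"
  proof
    fix x assume "x \<in> eigenspace_U J U z"
    then have "U x = cscale J z x" by (simp add: eigenspace_U_def)
    show "x \<in> closure ((\<lambda>T. T \<Omega>) ` spectral_subspace J U X z)"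
      unfolding closure_approachable
    proof (intro allI impI)
      fix e :: real assume "0 < e"
      then obtain A where "A \<in> X" "dist (A \<Omega>) x < e"
        using cyclic closure_approachable[of x "(\<lambda>T. T \<Omega>) ` X"] by (auto simp: X_def)
      then obtain T where "T \<in> X" "U \<circ> T \<circ> adjoint U = cscale J z \<circ> T"
          "norm (T \<Omega> - x) \<le> norm (A \<Omega> - x)"
        using spectral_subspace_approx[OF cs unitary z \<open>U \<Omega> = \<Omega>\<close> X_cb X_ad cyclic'[folded X_def]
            \<open>A \<in> X\<close> \<open>U x = cscale J z x\<close>] vN by metis
      then show "\<exists>y\<in>(\<lambda>T. T \<Omega>) ` spectral_subspace J U X z. dist y x < e"
        using \<open>dist (A \<Omega>) x < e\<close> by (auto simp: spectral_subspace_def dist_norm)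
    qed
  qed
qed

lemma adjoint_in_spectral_subspace:
  fixes J U :: "'h::{real_inner,complete_space} \<Rightarrow> 'h"
  assumes cs: "complex_structure J" and unitary: "unitary_op J U"
    and "adjoint_closed X" and X_cb: "\<And>T. T \<in> X \<Longrightarrow> cbounded J T"
    and T: "T \<in> spectral_subspace J U X z"
  shows "adjoint T \<in> spectral_subspace J U X (cnj z)"
proof -
  have "T \<in> X" and T_cov: "U \<circ> T \<circ> adjoint U = cscale J z \<circ> T"
    using T by (simp_all add: spectral_subspace_def)
  have "cbounded J T" using X_cb \<open>T \<in> X\<close> .
  then have bl: "bounded_linear T" "bounded_linear U" "bounded_linear (adjoint U)"
    "bounded_linear (cscale J z)"
    using unitary_op_bounded_linear[OF cs unitary] unitary_op_bounded_linear[OF cs unitary_op_adjoint[OF cs unitary]]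
      bounded_linear_cscale[OF cs] by (simp_all add: cbounded_def)
  have "bounded_linear (U \<circ> T)" using bl bounded_linear_compose[of U T] by (simp add: o_def)
  then have "adjoint (U \<circ> T \<circ> adjoint U) = adjoint (adjoint U) \<circ> (adjoint T \<circ> adjoint U)"
    by (simp add: adjoint_compose_hilbert bl)
  then have "U \<circ> adjoint T \<circ> adjoint U = adjoint (U \<circ> T \<circ> adjoint U)"
    by (simp add: adjoint_adjoint_hilbert[OF bl(2)] o_assoc)
  also have "\<dots> = adjoint T \<circ> cscale J (cnj z)"
    using bl by (simp add: T_cov adjoint_compose_hilbert adjoint_cscale[OF cs])
  also have "\<dots> = cscale J (cnj z) \<circ> adjoint T"
    using cbounded_commute_cscale[OF cs cbounded_adjoint[OF cs \<open>cbounded J T\<close>]] by (simp add: fun_eq_iff)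
  finally show ?thesis
    using \<open>adjoint_closed X\<close> \<open>T \<in> X\<close> by (simp add: spectral_subspace_def adjoint_closed_def)
qed

section \<open>Separating and cyclic vectors\<close>

lemma subspace_commutant_orbit:
  fixes J :: "'h::{real_inner,complete_space} \<Rightarrow> 'h"
  assumes cs: "complex_structure J" and S_cb: "\<And>R. R \<in> S \<Longrightarrow> cbounded J R"
  shows "subspace ((\<lambda>C. C \<Omega>) ` commutant J S)"
proof -
  interpret J: bounded_linear J by (rule complex_structure_bounded_linear[OF cs])
  have R: "bounded_linear R" if "R \<in> S" for R using S_cb[OF that] by (simp add: cbounded_def)
  have "(\<lambda>x. 0) \<in> commutant J S"
    using R by (auto simp: commutant_def cbounded_def fun_eq_iff linear_0 bounded_linear.linear)
  moreover have "(\<lambda>x. A x + B x) \<in> commutant J S" if "A \<in> commutant J S" "B \<in> commutant J S" for A B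
    using that R by (auto simp: commutant_def cbounded_def fun_eq_iff J.add bounded_linear_add
        linear_add bounded_linear.linear)
  moreover have "(\<lambda>x. r *\<^sub>R A x) \<in> commutant J S" if "A \<in> commutant J S" for A r
    using that R by (auto simp: commutant_def cbounded_def fun_eq_iff J.scale linear_scale
        bounded_linear.linear intro: bounded_linear_compose[OF bounded_linear_scaleR_right])
  ultimately show ?thesis
    unfolding subspace_def by (auto simp: image_iff)
qed

lemma orthocomplement_projection_in_commutant:
  fixes J :: "'h::{real_inner,complete_space} \<Rightarrow> 'h"
  assumes K: "closed K" "subspace K" and "adjoint_closed Y" "J \<in> Y"
    and Y_bl: "\<And>C. C \<in> Y \<Longrightarrow> bounded_linear C" and Y_inv: "\<And>C. C \<in> Y \<Longrightarrow> C ` K \<subseteq> K"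
  shows "(\<lambda>x. x - orthogonal_projection K x) \<in> commutant J Y"
proof -
  let ?Q = "\<lambda>x. x - orthogonal_projection K x"
  have "orthogonal_projection K (C x) = C (orthogonal_projection K x)" if "C \<in> Y" for C x
  proof (rule orthogonal_projection_commute[OF K Y_bl[OF that] Y_inv[OF that]])
    show "adjoint C ` K \<subseteq> K" using Y_inv \<open>adjoint_closed Y\<close> that by (simp add: adjoint_closed_def)
  qed (rule adjoint_works_hilbert[OF Y_bl[OF that]])
  then have "?Q (C x) = C (?Q x)" if "C \<in> Y" for C x
    using linear_diff[OF bounded_linear.linear[OF Y_bl[OF that]]] that by simp
  moreover have "bounded_linear ?Q"
    by (intro bounded_linear_sub bounded_linear_ident bounded_linear_orthogonal_projection K)
  ultimately show ?thesis using \<open>J \<in> Y\<close> by (auto simp: commutant_def cbounded_def fun_eq_iff)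
qed

text \<open>The orthogonal complement of \<open>X' \<Omega>\<close> reduces \<open>X'\<close>, so its projection lies in
  \<open>X'' = X\<close> and annihilates \<open>\<Omega>\<close>.\<close>

lemma separating_imp_cyclic_commutant:
  fixes J :: "'h::{real_inner,complete_space} \<Rightarrow> 'h"
  assumes cs: "complex_structure J" and vN: "commutant J (commutant J X) = X"
    and "adjoint_closed X" and X_cb: "\<And>T. T \<in> X \<Longrightarrow> cbounded J T"
    and separating: "\<forall>T\<in>X. T \<Omega> = 0 \<longrightarrow> T = (\<lambda>x. 0)"
  shows "closure ((\<lambda>C. C \<Omega>) ` commutant J X) = UNIV"
proof -
  let ?Y = "commutant J X"
  define K where "K = closure ((\<lambda>C. C \<Omega>) ` ?Y)"
  have K: "closed K" "subspace K"
    unfolding K_def using subspace_closure[OF subspace_commutant_orbit[OF cs X_cb]] by simp_all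
  have Y_bl: "bounded_linear C" if "C \<in> ?Y" for C
    using commutant_cbounded[OF that] by (simp add: cbounded_def)
  have "C ` K \<subseteq> K" if "C \<in> ?Y" for C
  proof -
    have "C ` K \<subseteq> closure (C ` (\<lambda>C. C \<Omega>) ` ?Y)"
      unfolding K_def by (rule closure_bounded_linear_image_subset[OF Y_bl[OF that]])
    also have "\<dots> \<subseteq> K"
      unfolding K_def using compose_in_commutant[OF that] by (intro closure_mono) auto
    finally show ?thesis .
  qed
  moreover have "adjoint_closed ?Y"
    using adjoint_closed_commutant[OF cs _ \<open>adjoint_closed X\<close>] X_cb by (simp add: cbounded_def)
  ultimately have "(\<lambda>x. x - orthogonal_projection K x) \<in> X"
    using orthocomplement_projection_in_commutant[OF K _ complex_structure_in_commutant[OF cs X_cb]]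
      Y_bl vN by blast
  moreover have "\<Omega> \<in> K" using ident_in_commutant closure_subset by (force simp: K_def)
  ultimately have "x - orthogonal_projection K x = 0" for x
    using separating orthogonal_projection_fixes[OF K] by (metis diff_self)
  then have "x \<in> K" for x using orthogonal_projection_in[OF K] by (metis eq_iff_diff_eq_0)
  then show ?thesis by (auto simp: K_def)
qed

lemma cnj_in_point_spectrum:
  fixes J U :: "'h::{real_inner,complete_space} \<Rightarrow> 'h"
  assumes cs: "complex_structure J" and unitary: "unitary_op J U" and "U \<Omega> = \<Omega>"
    and "adjoint_closed X" and X_cb: "\<And>T. T \<in> X \<Longrightarrow> cbounded J T"
    and separating: "\<forall>T\<in>X. T \<Omega> = 0 \<longrightarrow> T = (\<lambda>x. 0)"
    and dense: "closure ((\<lambda>T. T \<Omega>) ` spectral_subspace J U X z) = eigenspace_U J U z"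
    and "z \<in> point_spectrum J U"
  shows "cnj z \<in> point_spectrum J U"
proof -
  obtain x where "x \<noteq> 0" "x \<in> eigenspace_U J U z"
    using \<open>z \<in> point_spectrum J U\<close> by (auto simp: point_spectrum_def eigenspace_U_def)
  then obtain T where T: "T \<in> spectral_subspace J U X z" "T \<Omega> \<noteq> 0"
    using dense closure_minimal[of "(\<lambda>T. T \<Omega>) ` spectral_subspace J U X z" "{0}"] by blast
  have "bounded_linear T" using X_cb T(1) by (simp add: spectral_subspace_def cbounded_def)
  have T': "adjoint T \<in> spectral_subspace J U X (cnj z)"
    by (rule adjoint_in_spectral_subspace[OF cs unitary \<open>adjoint_closed X\<close> X_cb T(1)])
  have "adjoint T \<Omega> \<noteq> 0"
  proof
    assume "adjoint T \<Omega> = 0"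
    then have "adjoint T = (\<lambda>x. 0)" using separating T' by (simp add: spectral_subspace_def)
    then have "T = adjoint (\<lambda>x. 0)" using adjoint_adjoint_hilbert[OF \<open>bounded_linear T\<close>] by simp
    also have "adjoint (\<lambda>x::'h. 0::'h) = (\<lambda>x. 0)" by (rule adjoint_unique) simp
    finally show False using T(2) by simp
  qed
  then show ?thesis
    using spectral_subspace_eigenvector[OF cs unitary \<open>U \<Omega> = \<Omega>\<close> T']
    by (auto simp: point_spectrum_def eigenspace_U_def)
qed

section \<open>The GNS covariant representation\<close>

context
  fixes A :: "'a cstar_alg" and \<alpha> :: "'a \<Rightarrow> 'a" and \<omega> :: "'a \<Rightarrow> complex"
    and J :: "'h::{real_inner,complete_space} \<Rightarrow> 'h"
    and \<pi> :: "'a \<Rightarrow> 'h \<Rightarrow> 'h" and U :: "'h \<Rightarrow> 'h" and \<Omega> :: 'h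
  assumes sys: "cstar_dynamical_system A \<alpha> \<omega>"
    and gns: "gns_covariant_rep A \<alpha> \<omega> J \<pi> U \<Omega>"
begin

lemma gns_complex_structure: "complex_structure J"
  and gns_unitary: "unitary_op J U"
  and gns_cbounded: "cbounded J (\<pi> a)"
  and gns_cyclic: "closure (range (\<lambda>a. \<pi> a \<Omega>)) = UNIV"
  using gns by (simp_all add: gns_covariant_rep_def)

lemma gns_adjoint_closed: "adjoint_closed (range \<pi>)"
proof -
  have "adjoint (\<pi> a) = \<pi> (cstar A a)" for a using gns by (simp add: gns_covariant_rep_def)
  then show ?thesis unfolding adjoint_closed_def by auto
qed

lemma gns_unitary_fixes_cyclic: "U \<Omega> = \<Omega>"
proof -
  have U: "bounded_linear U" by (rule unitary_op_bounded_linear[OF gns_complex_structure gns_unitary])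
  \<comment> \<open>\<open>\<omega> \<circ> \<alpha> = \<omega>\<close> says \<open>\<langle>\<Omega>, U \<pi>(a) \<Omega>\<rangle> = \<langle>\<Omega>, \<pi>(a) \<Omega>\<rangle>\<close>\<close>
  have "inner \<Omega> (U v) = inner \<Omega> v" for v
  proof (rule bounded_linear_eq_on_dense[OF _ bounded_linear_inner_right gns_cyclic])
    show "bounded_linear (\<lambda>v. inner \<Omega> (U v))"
      by (rule bounded_linear_compose[OF bounded_linear_inner_right U])
    fix v assume "v \<in> range (\<lambda>a. \<pi> a \<Omega>)"
    then show "inner \<Omega> (U v) = inner \<Omega> v"
      using sys gns
      by (auto simp: cstar_dynamical_system_def gns_covariant_rep_def cinner_def complex_eq_iff)
  qed
  then have "adjoint U \<Omega> = \<Omega>"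
    by (metis adjoint_works_hilbert'[OF U] vector_eq_rdot)
  then show ?thesis
    using unitary_op_adjoint_right[OF gns_complex_structure gns_unitary, of \<Omega>] by simp
qed

lemma gns_covariance: "U (\<pi> a y) = \<pi> (\<alpha> a) (U y)"
proof (rule bounded_linear_eq_on_dense[where f="\<lambda>y. U (\<pi> a y)" and g="\<lambda>y. \<pi> (\<alpha> a) (U y)",
      OF _ _ gns_cyclic])
  have "bounded_linear U" "\<And>a. bounded_linear (\<pi> a)"
    using unitary_op_bounded_linear[OF gns_complex_structure gns_unitary] gns_cbounded
    by (simp_all add: cbounded_def)
  then show "bounded_linear (\<lambda>y. U (\<pi> a y))" "bounded_linear (\<lambda>y. \<pi> (\<alpha> a) (U y))"
    by (simp_all add: bounded_linear_compose)
  have mult: "\<pi> (cmult A a b) = \<pi> a \<circ> \<pi> b" "\<alpha> (cmult A a b) = cmult A (\<alpha> a) (\<alpha> b)"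
    and U_\<pi>: "U (\<pi> a \<Omega>) = \<pi> (\<alpha> a) \<Omega>" for a b
    using sys gns by (simp_all add: cstar_dynamical_system_def star_automorphism_def gns_covariant_rep_def)
  fix y assume "y \<in> range (\<lambda>b. \<pi> b \<Omega>)"
  then obtain b where "y = \<pi> b \<Omega>" by blast
  have "U (\<pi> a (\<pi> b \<Omega>)) = \<pi> (\<alpha> (cmult A a b)) \<Omega>" by (simp flip: U_\<pi> add: mult(1))
  also have "\<dots> = \<pi> (\<alpha> a) (U (\<pi> b \<Omega>))" by (simp add: mult U_\<pi>)
  finally show "U (\<pi> a y) = \<pi> (\<alpha> a) (U y)" by (simp add: \<open>y = \<pi> b \<Omega>\<close>)
qed

lemma gns_ad_invariant: "ad_invariant U (range \<pi>)"
  unfolding ad_invariant_def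
proof (intro ballI conjI)
  have W: "adjoint U (U x) = x" "U (adjoint U x) = x" for x
    using gns_complex_structure gns_unitary by simp_all
  fix T assume "T \<in> range \<pi>"
  then obtain b where "T = \<pi> b" by blast
  have "surj \<alpha>" using sys by (simp add: cstar_dynamical_system_def star_automorphism_def bij_def)
  then obtain a where "b = \<alpha> a" by (metis surjD)
  have "U \<circ> \<pi> b \<circ> adjoint U = \<pi> (\<alpha> b)"
    by (simp add: fun_eq_iff gns_covariance W)
  moreover have "adjoint U \<circ> \<pi> (\<alpha> a) \<circ> U = \<pi> a"
    by (simp add: fun_eq_iff W flip: gns_covariance)
  ultimately show "U \<circ> T \<circ> adjoint U \<in> range \<pi>" "adjoint U \<circ> T \<circ> U \<in> range \<pi>"
    using \<open>T = \<pi> b\<close> \<open>b = \<alpha> a\<close> by auto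
qed

end

theorem proposition2p1:
  fixes A :: "'a cstar_alg" and \<alpha> :: "'a \<Rightarrow> 'a" and \<omega> :: "'a \<Rightarrow> complex"
    and J :: "'h::{real_inner,complete_space} \<Rightarrow> 'h"
    and \<pi> :: "'a \<Rightarrow> 'h \<Rightarrow> 'h" and U :: "'h \<Rightarrow> 'h" and \<Omega> :: 'h
  defines "M \<equiv> commutant J (commutant J (range \<pi>))"
  assumes sys: "cstar_dynamical_system A \<alpha> \<omega>"
    and gns: "gns_covariant_rep A \<alpha> \<omega> J \<pi> U \<Omega>"
    and separating: "\<forall>T\<in>M. T \<Omega> = 0 \<longrightarrow> T = (\<lambda>x. 0)"
  shows "(\<forall>z. cmod z = 1 \<longrightarrow>
            closure ((\<lambda>T. T \<Omega>) ` spectral_subspace J U M z) = eigenspace_U J U z \<and>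
            closure ((\<lambda>T. T \<Omega>) ` spectral_subspace J U (commutant J M) z) = eigenspace_U J U z)
       \<and> (\<forall>z \<in> point_spectrum J U. cnj z \<in> point_spectrum J U)"
proof -
  note cs = gns_complex_structure[OF sys gns] and unitary = gns_unitary[OF sys gns]
    and fixes_\<Omega> = gns_unitary_fixes_cyclic[OF sys gns]
  have \<pi>_cb: "\<And>R. R \<in> range \<pi> \<Longrightarrow> cbounded J R" using gns_cbounded[OF sys gns] by blast
  have "adjoint_closed M"
    unfolding M_def using gns_adjoint_closed[OF sys gns] \<pi>_cb
    by (intro adjoint_closed_commutant[OF cs]) (auto simp: commutant_def cbounded_def)
  have cyclic: "closure ((\<lambda>T. T \<Omega>) ` M) = UNIV"
    using gns_cyclic[OF sys gns] closure_mono[of "range (\<lambda>a. \<pi> a \<Omega>)" "(\<lambda>T. T \<Omega>) ` M"]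
      subset_double_commutant[OF \<pi>_cb] unfolding M_def by blast
  have cyclic': "closure ((\<lambda>T. T \<Omega>) ` commutant J M) = UNIV"
    using separating_imp_cyclic_commutant[OF cs _ \<open>adjoint_closed M\<close> _ separating]
    unfolding M_def by (simp add: triple_commutant[OF commutant_cbounded] commutant_cbounded)
  have M': "commutant J M = commutant J (range \<pi>)" unfolding M_def by (rule triple_commutant[OF \<pi>_cb])
  have ad: "ad_invariant U (range \<pi>)" "ad_invariant U (commutant J (range \<pi>))"
    using commutant_ad_invariant[OF cs unitary] gns_ad_invariant[OF sys gns] by blast+
  have spectral: "closure ((\<lambda>T. T \<Omega>) ` spectral_subspace J U M z) = eigenspace_U J U z"
    "closure ((\<lambda>T. T \<Omega>) ` spectral_subspace J U (commutant J M) z) = eigenspace_U J U z"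
    if "cmod z = 1" for z
    using closure_spectral_subspace_commutant[OF cs unitary that fixes_\<Omega> commutant_cbounded ad(2)]
      closure_spectral_subspace_commutant[OF cs unitary that fixes_\<Omega> \<pi>_cb ad(1)]
      cyclic cyclic' by (simp_all add: M' flip: M_def)
  have "cnj z \<in> point_spectrum J U" if "z \<in> point_spectrum J U" for z
    using cnj_in_point_spectrum[OF cs unitary fixes_\<Omega> \<open>adjoint_closed M\<close> _ separating spectral(1) that]
      unitary_op_eigenvalue_norm[OF cs unitary] that
    by (auto simp: M_def commutant_cbounded point_spectrum_def)
  with spectral show ?thesis by blast
qed

end
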